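(* The constant curvature $\mathcal R$ of the Finsleroid Indicatrix $\{R\in V_N:K(g;R)=1\}$ (with the Riemannian metric induced by $g_{pq}(g;R)$) is related to the discriminant $D_{\{B\}}=g^2-4$ of the characteristic quadratic form $B=Z^2+gqZ+q^2$ (viewed as a quadratic form in $(Z,q)$) by $$\mathcal R=-\tfrac14 D_{\{B\}}=1-\tfrac14g^2=h^2 .$$
   Context: Let $N\ge2$, $V_N=\mathbb{R}^N$ with points $R=(R^1,\dots,R^N)$, $Z=R^N$; indices $a,b$ run over $1,\dots,N-1$, $p,q$ over $1,\dots,N$, repeated indices summed. Fix a symmetric positive-definite matrix $(r_{ab})$, $q(R)=\sqrt{r_{ab}R^aR^b}$. Fix $g\in(-2,2)$, $h=\sqrt{1-g^2/4}$, $G=g/h$. Define $B(g;R)=Z^2+gqZ+q^2$, $A(g;R)=Z+\frac12gq$, $\Phi(g;R)=\arctan(A/(hq))$ for $q>0$ ($\Phi=\pm\pi/2$ if $q=0$, $Z\gtrless0$), $J=e^{\frac12G\Phi}$, and the Finsleroid metric function $K(g;R)=\sqrt{B}\,J$. The Finsler metric tensor is $g_{pq}=\frac12\partial^2K^2/\partial R^p\partial R^q$. "Curvature $\mathcal R$" means the constant $\kappa$ with Riemann tensor $\kappa(\gamma_{ik}\gamma_{jl}-\gamma_{il}\gamma_{jk})$ for the induced metric $\gamma$. *)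

theory Defs
  imports "HOL-Analysis.Analysis"
begin

text \<open>Points of V_N are pairs (R', Z) with R' = (R^1..R^(N-1)) :: real^'m and Z = R^N,
  so N - 1 = CARD('m) and N \<ge> 2 automatically.\<close>

definition fq :: "real^'m^'m \<Rightarrow> ((real^'m) \<times> real) \<Rightarrow> real" where
  "fq r R = sqrt (fst R \<bullet> (r *v fst R))"

definition fh :: "real \<Rightarrow> real" where
  "fh g = sqrt (1 - g^2 / 4)"

definition fG :: "real \<Rightarrow> real" where
  "fG g = g / fh g"

definition fB :: "real \<Rightarrow> real^'m^'m \<Rightarrow> ((real^'m) \<times> real) \<Rightarrow> real" where
  "fB g r R = (snd R)^2 + g * fq r R * snd R + (fq r R)^2"

definition fA :: "real \<Rightarrow> real^'m^'m \<Rightarrow> ((real^'m) \<times> real) \<Rightarrow> real" where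
  "fA g r R = snd R + g * fq r R / 2"

definition fPhi :: "real \<Rightarrow> real^'m^'m \<Rightarrow> ((real^'m) \<times> real) \<Rightarrow> real" where
  "fPhi g r R = (if fq r R > 0 then arctan (fA g r R / (fh g * fq r R))
                 else if snd R \<ge> 0 then pi / 2 else - pi / 2)"

definition fJ :: "real \<Rightarrow> real^'m^'m \<Rightarrow> ((real^'m) \<times> real) \<Rightarrow> real" where
  "fJ g r R = exp (fG g / 2 * fPhi g r R)"

definition fK :: "real \<Rightarrow> real^'m^'m \<Rightarrow> ((real^'m) \<times> real) \<Rightarrow> real" where
  "fK g r R = sqrt (fB g r R) * fJ g r R"

definition finsler_g :: "real \<Rightarrow> real^'m^'m \<Rightarrow> ((real^'m) \<times> real) \<Rightarrow> ((real^'m) \<times> real)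
     \<Rightarrow> ((real^'m) \<times> real) \<Rightarrow> real" where
  "finsler_g g r R v w =
     (1/2) * deriv (\<lambda>s. deriv (\<lambda>t. (fK g r (R + t *\<^sub>R v + s *\<^sub>R w))^2) 0) 0"

definition pd :: "(real^'m \<Rightarrow> 'b::real_normed_vector) \<Rightarrow> 'm \<Rightarrow> real^'m \<Rightarrow> 'b" where
  "pd f i u = vector_derivative (\<lambda>t. f (u + t *\<^sub>R axis i 1)) (at 0)"

fun Ck :: "nat \<Rightarrow> (real^'m \<Rightarrow> 'b::real_normed_vector) \<Rightarrow> (real^'m) set \<Rightarrow> bool" where
  "Ck 0 f U = continuous_on U f"
| "Ck (Suc k) f U = (continuous_on U f \<and>
      (\<forall>i. \<forall>u\<in>U. (\<lambda>t. f (u + t *\<^sub>R axis i 1)) differentiable (at 0)) \<and>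
      (\<forall>i. Ck k (pd f i) U))"

definition smooth_on :: "(real^'m \<Rightarrow> 'b::real_normed_vector) \<Rightarrow> (real^'m) set \<Rightarrow> bool" where
  "smooth_on f U = (\<forall>k. Ck k f U)"

definition ind_metric :: "real \<Rightarrow> real^'m^'m \<Rightarrow> (real^'m \<Rightarrow> (real^'m) \<times> real) \<Rightarrow> real^'m \<Rightarrow> real^'m^'m" where
  "ind_metric g r \<phi> u = (\<chi> i j. finsler_g g r (\<phi> u) (pd \<phi> i u) (pd \<phi> j u))"

definition chr1 :: "real \<Rightarrow> real^'m^'m \<Rightarrow> (real^'m \<Rightarrow> (real^'m) \<times> real) \<Rightarrow> 'm \<Rightarrow> 'm \<Rightarrow> 'm \<Rightarrow> real^'m \<Rightarrow> real" where
  "chr1 g r \<phi> k i j u = (1/2) *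
     (pd (\<lambda>v. ind_metric g r \<phi> v $ j $ k) i u + pd (\<lambda>v. ind_metric g r \<phi> v $ i $ k) j u
      - pd (\<lambda>v. ind_metric g r \<phi> v $ i $ j) k u)"

definition chr2 :: "real \<Rightarrow> real^'m^'m \<Rightarrow> (real^'m \<Rightarrow> (real^'m) \<times> real) \<Rightarrow> 'm \<Rightarrow> 'm \<Rightarrow> 'm \<Rightarrow> real^'m \<Rightarrow> real" where
  "chr2 g r \<phi> l i j u = (\<Sum>k\<in>UNIV. matrix_inv (ind_metric g r \<phi> u) $ l $ k * chr1 g r \<phi> k i j u)"

text \<open>With this convention a space of constant (sectional) curvature kappa satisfies
  R_{ijkl} = kappa (gamma_ik gamma_jl - gamma_il gamma_jk) (e.g. kappa = 1 for the unit sphere).\<close>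
definition riem_up :: "real \<Rightarrow> real^'m^'m \<Rightarrow> (real^'m \<Rightarrow> (real^'m) \<times> real) \<Rightarrow> 'm \<Rightarrow> 'm \<Rightarrow> 'm \<Rightarrow> 'm \<Rightarrow> real^'m \<Rightarrow> real" where
  "riem_up g r \<phi> m j k l u =
     pd (chr2 g r \<phi> m l j) k u - pd (chr2 g r \<phi> m k j) l u
     + (\<Sum>p\<in>UNIV. chr2 g r \<phi> m k p u * chr2 g r \<phi> p l j u - chr2 g r \<phi> m l p u * chr2 g r \<phi> p k j u)"

definition riem :: "real \<Rightarrow> real^'m^'m \<Rightarrow> (real^'m \<Rightarrow> (real^'m) \<times> real) \<Rightarrow> 'm \<Rightarrow> 'm \<Rightarrow> 'm \<Rightarrow> 'm \<Rightarrow> real^'m \<Rightarrow> real" where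
  "riem g r \<phi> i j k l u = (\<Sum>m\<in>UNIV. ind_metric g r \<phi> u $ i $ m * riem_up g r \<phi> m j k l u)"

definition quad_disc :: "real \<Rightarrow> real \<Rightarrow> real \<Rightarrow> real" where
  "quad_disc a b c = b^2 - 4 * a * c"

end

theory Submission
  imports Defs
begin

(* The map sigma(R) = (R' / sqrt B, A / (h sqrt B)) sends every point off the axis q = 0 into the
   sphere x' . (r x') + x_N^2 = 1 / h^2 of the Euclidean inner product
   (x, y) = x' . (r y') + x_N y_N, because B = A^2 + h^2 q^2.  On the indicatrix K = 1 we have
   J^2 = 1 / B, and for vectors v, w tangent to the indicatrix (those with d(K^2)(v) = 0) a direct
   computation gives g_pq(R) v^p w^q = (d sigma v, d sigma w).  So sigma composed with a chart of
   the indicatrix is an isometric immersion into a sphere of radius rho = 1 / h, and Gauss' equation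
   for a hypersurface of a Euclidean sphere gives the constant curvature 1 / rho^2 = h^2. *)

section \<open>Partial derivatives and the classes \<open>C\<^sup>k\<close>\<close>

lemma eventually_line_in_open:
  fixes u :: "'a::real_normed_vector"
  assumes "open U" "u \<in> U"
  shows "\<forall>\<^sub>F t in nhds 0. u + t *\<^sub>R e \<in> U"
proof -
  have "open ((\<lambda>t::real. u + t *\<^sub>R e) -` U)"
    by (intro open_vimage assms(1) continuous_intros)
  with assms(2) show ?thesis
    using eventually_nhds_in_open[of "(\<lambda>t::real. u + t *\<^sub>R e) -` U" 0] by simp
qed

lemma has_vector_derivative_line_cong:
  fixes u :: "'a::real_normed_vector"
  assumes "open U" "u \<in> U" "\<And>v. v \<in> U \<Longrightarrow> f v = f' v"
  shows "((\<lambda>t. f (u + t *\<^sub>R e)) has_vector_derivative D) (at 0) \<longleftrightarrow>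
         ((\<lambda>t. f' (u + t *\<^sub>R e)) has_vector_derivative D) (at 0)"
  apply (rule has_vector_derivative_cong_ev)
  using eventually_line_in_open[OF assms(1,2), of e] assms(2,3) by (auto elim!: eventually_mono)

lemma pd_cong:
  assumes "open U" "u \<in> U" "\<And>v. v \<in> U \<Longrightarrow> f v = f' v"
  shows "pd f i u = pd f' i u"
  unfolding pd_def vector_derivative_def using has_vector_derivative_line_cong[of U u f f'] assms by simp

lemma pd_eqI:
  "((\<lambda>t. f (u + t *\<^sub>R axis i 1)) has_vector_derivative D) (at 0) \<Longrightarrow> pd f i u = D"
  unfolding pd_def by (rule vector_derivative_at)

lemma pd_eq_0_if_constant:
  assumes "open U" "u \<in> U" "\<And>v. v \<in> U \<Longrightarrow> f v = c"
  shows "pd f i u = 0"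
proof -
  have "pd f i u = pd (\<lambda>v. c) i u" using pd_cong[of U u f "\<lambda>v. c" i] assms by auto
  also have "\<dots> = 0" by (rule pd_eqI) simp
  finally show ?thesis .
qed

lemma Ck_has_pd:
  assumes "Ck (Suc k) f U" "u \<in> U"
  shows "((\<lambda>t. f (u + t *\<^sub>R axis i 1)) has_vector_derivative pd f i u) (at 0)"
  using assms unfolding pd_def by (auto simp: vector_derivative_works[symmetric])

lemma Ck_has_pd_cong:
  assumes "open U" "Ck (Suc k) f U" "u \<in> U" "\<And>v. v \<in> U \<Longrightarrow> f v = f' v"
  shows "((\<lambda>t. f' (u + t *\<^sub>R axis i 1)) has_vector_derivative pd f' i u) (at 0)"
proof -
  have "pd f i u = pd f' i u" using pd_cong[of U u f f' i] assms by auto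
  with Ck_has_pd[OF assms(2,3), of i] has_vector_derivative_line_cong[of U u f f' "axis i 1"] assms
  show ?thesis by auto
qed

lemma Ck_line_has_real_derivative:
  fixes f :: "real^'m \<Rightarrow> real"
  assumes "Ck (Suc k) f U" "p + s *\<^sub>R axis i 1 \<in> U"
  shows "((\<lambda>s. f (p + s *\<^sub>R axis i 1)) has_real_derivative pd f i (p + s *\<^sub>R axis i 1)) (at s)"
proof -
  have "((\<lambda>h. f ((p + s *\<^sub>R axis i 1) + h *\<^sub>R axis i 1)) has_real_derivative
      pd f i (p + s *\<^sub>R axis i 1)) (at 0)"
    using Ck_has_pd[OF assms] by (simp add: has_real_derivative_iff_has_vector_derivative)
  moreover have "(\<lambda>h. f ((p + s *\<^sub>R axis i 1) + h *\<^sub>R axis i 1)) = (\<lambda>h. f (p + (h + s) *\<^sub>R axis i 1))"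
    by (simp add: algebra_simps)
  ultimately show ?thesis using DERIV_shift[of "\<lambda>s. f (p + s *\<^sub>R axis i 1)" _ 0 s] by simp
qed

lemma Ck_continuous_on: "Ck k f U \<Longrightarrow> continuous_on U f"
  by (cases k) auto

lemma Ck_SucD: "Ck (Suc k) f U \<Longrightarrow> Ck k f U"
proof (induction k arbitrary: f)
  case 0 then show ?case by simp
next
  case (Suc k)
  then have "Ck k (pd f i) U" for i by simp
  with Suc.prems show ?case by simp
qed

lemma Ck_cong:
  assumes "open U" "\<And>v. v \<in> U \<Longrightarrow> f v = f' v" "Ck k f U"
  shows "Ck k f' U"
  using assms(2,3)
proof (induction k arbitrary: f f')
  case 0 then show ?case using continuous_on_cong[of U U f f'] by simp
next
  case (Suc k)
  have "continuous_on U f'" using Suc continuous_on_cong[of U U f f'] by simp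
  moreover have "(\<lambda>t. f' (u + t *\<^sub>R axis i 1)) differentiable (at 0)" if "u \<in> U" for i u
    using Ck_has_pd_cong[OF assms(1) Suc.prems(2) that] Suc.prems(1)
    by (auto intro: differentiableI_vector)
  moreover have "Ck k (pd f' i) U" for i
    using Suc.IH[of "pd f i" "pd f' i"] Suc.prems pd_cong[of U _ f f'] assms(1) by auto
  ultimately show ?case by simp
qed

lemma Ck_const: "Ck k (\<lambda>u. c) U"
proof (induction k arbitrary: c)
  case 0 then show ?case by simp
next
  case (Suc k)
  have pd_const: "pd (\<lambda>u. c) i = (\<lambda>u. 0)" for i
    by (rule ext, rule pd_eqI) simp
  have "Ck k (pd (\<lambda>u. c) i) U" for i unfolding pd_const by (rule Suc.IH)
  then show ?case by simp
qed

lemma Ck_add: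
  assumes "open U"
  shows "Ck k f U \<Longrightarrow> Ck k g U \<Longrightarrow> Ck k (\<lambda>u. f u + g u) U"
proof (induction k arbitrary: f g)
  case 0 then show ?case by (simp add: continuous_on_add)
next
  case (Suc k)
  have hv: "((\<lambda>t. f (u + t *\<^sub>R axis i 1) + g (u + t *\<^sub>R axis i 1)) has_vector_derivative
     pd f i u + pd g i u) (at 0)" if "u \<in> U" for u i
    using Ck_has_pd[OF Suc.prems(1) that] Ck_has_pd[OF Suc.prems(2) that] by (intro derivative_intros)
  have "Ck k (pd (\<lambda>u. f u + g u) i) U" for i
    apply (rule Ck_cong[OF assms, of "\<lambda>u. pd f i u + pd g i u"])
    using pd_eqI[OF hv] Suc by auto
  moreover have "continuous_on U (\<lambda>u. f u + g u)"
    using Suc.prems by (auto intro!: continuous_on_add dest: Ck_continuous_on)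
  ultimately show ?case using hv by (auto intro: differentiableI_vector)
qed

lemma Ck_linear:
  assumes "open U" "bounded_linear L"
  shows "Ck k f U \<Longrightarrow> Ck k (\<lambda>u. L (f u)) U"
proof (induction k arbitrary: f)
  case 0 then show ?case
    using continuous_on_compose2[OF linear_continuous_on[OF assms(2)] Ck_continuous_on[OF 0] subset_UNIV]
    by simp
next
  case (Suc k)
  have hv: "((\<lambda>t. L (f (u + t *\<^sub>R axis i 1))) has_vector_derivative L (pd f i u)) (at 0)"
    if "u \<in> U" for u i
    using bounded_linear.has_vector_derivative[OF assms(2) Ck_has_pd[OF Suc.prems that]] .
  have "Ck k (pd (\<lambda>u. L (f u)) i) U" for i
    apply (rule Ck_cong[OF assms(1), of "\<lambda>u. L (pd f i u)"])
    using pd_eqI[OF hv] Suc by auto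
  moreover have "continuous_on U (\<lambda>u. L (f u))"
    by (rule continuous_on_compose2[OF linear_continuous_on[OF assms(2)]
          Ck_continuous_on[OF Suc.prems] subset_UNIV])
  ultimately show ?case using hv by (auto intro: differentiableI_vector)
qed

lemma Ck_bilinear:
  assumes "open U" "bounded_bilinear P"
  shows "Ck k f U \<Longrightarrow> Ck k g U \<Longrightarrow> Ck k (\<lambda>u. P (f u) (g u)) U"
proof (induction k arbitrary: f g)
  case 0 then show ?case
    using bounded_bilinear.continuous_on[OF assms(2)] by simp
next
  case (Suc k)
  have hv: "((\<lambda>t. P (f (u + t *\<^sub>R axis i 1)) (g (u + t *\<^sub>R axis i 1))) has_vector_derivative
      P (f u) (pd g i u) + P (pd f i u) (g u)) (at 0)"
    if "u \<in> U" for u i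
    using bounded_bilinear.has_vector_derivative[OF assms(2)
        Ck_has_pd[OF Suc.prems(1) that] Ck_has_pd[OF Suc.prems(2) that]]
    by simp
  have "Ck k (pd (\<lambda>u. P (f u) (g u)) i) U" for i
  proof (rule Ck_cong[OF assms(1), of "\<lambda>u. P (f u) (pd g i u) + P (pd f i u) (g u)"])
    show "P (f u) (pd g i u) + P (pd f i u) (g u) = pd (\<lambda>u. P (f u) (g u)) i u" if "u \<in> U" for u
      using pd_eqI[OF hv[OF that]] by simp
    show "Ck k (\<lambda>u. P (f u) (pd g i u) + P (pd f i u) (g u)) U"
      using Ck_SucD[OF Suc.prems(1)] Ck_SucD[OF Suc.prems(2)] Suc.prems
      by (intro Ck_add[OF assms(1)] Suc.IH) auto
  qed
  moreover have "continuous_on U (\<lambda>u. P (f u) (g u))"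
    using Suc.prems Ck_continuous_on bounded_bilinear.continuous_on[OF assms(2)] by metis
  ultimately show ?case using hv by (auto intro: differentiableI_vector)
qed

lemmas Ck_mult = Ck_bilinear[OF _ bounded_bilinear_mult]
lemmas Ck_scaleR = Ck_bilinear[OF _ bounded_bilinear_scaleR]
lemmas Ck_inner = Ck_bilinear[OF _ bounded_bilinear_inner]

lemma Ck_diff:
  assumes "open U" "Ck k f U" "Ck k g U"
  shows "Ck k (\<lambda>u. f u - g u) U"
proof -
  have "Ck k (\<lambda>u. f u + - g u) U"
    by (rule Ck_add[OF assms(1,2) Ck_linear[OF assms(1) _ assms(3)]])
      (simp add: bounded_linear_minus bounded_linear_ident)
  then show ?thesis by simp
qed

lemma Ck_Pair:
  assumes "open U" "Ck k f U" "Ck k g U"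
  shows "Ck k (\<lambda>u. (f u, g u)) U"
proof -
  have "Ck k (\<lambda>u. (f u, 0) + (0, g u)) U"
    using assms(2,3)
    by (intro Ck_add[OF assms(1)] Ck_linear[OF assms(1), of "\<lambda>x. (x, 0)"]
        Ck_linear[OF assms(1), of "\<lambda>y. (0, y)"])
      (simp_all add: bounded_linear_Pair bounded_linear_ident)
  then show ?thesis by simp
qed

lemma Ck_inverse:
  assumes "open U"
  shows "(\<And>u. u \<in> U \<Longrightarrow> f u \<noteq> 0) \<Longrightarrow> Ck k f U \<Longrightarrow> Ck k (\<lambda>u. inverse (f u) :: real) U"
proof (induction k arbitrary: f)
  case 0 then show ?case by (auto intro!: continuous_on_inverse)
next
  case (Suc k)
  have hv: "((\<lambda>t. inverse (f (u + t *\<^sub>R axis i 1))) has_vector_derivative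
      - (pd f i u * (inverse (f u) * inverse (f u)))) (at 0)"
    if "u \<in> U" for u i
  proof -
    have "((\<lambda>t. f (u + t *\<^sub>R axis i 1)) has_real_derivative pd f i u) (at 0)"
      using Ck_has_pd[OF Suc.prems(2) that] by (simp add: has_real_derivative_iff_has_vector_derivative)
    from DERIV_inverse_fun[OF this] Suc.prems(1)[OF that]
    show ?thesis by (simp add: has_real_derivative_iff_has_vector_derivative power2_eq_square)
  qed
  have IH: "Ck k (\<lambda>u. inverse (f u)) U" using Suc Ck_SucD by blast
  have "Ck k (pd (\<lambda>u. inverse (f u)) i) U" for i
  proof (rule Ck_cong[OF assms(1), of "\<lambda>u. - (pd f i u * (inverse (f u) * inverse (f u)))"])
    show "- (pd f i u * (inverse (f u) * inverse (f u))) = pd (\<lambda>u. inverse (f u)) i u" if "u \<in> U" for u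
      using pd_eqI[OF hv[OF that]] by simp
    show "Ck k (\<lambda>u. - (pd f i u * (inverse (f u) * inverse (f u)))) U"
      using Suc.prems(2) by (intro Ck_linear[OF assms(1), of uminus] Ck_mult[OF assms(1)] IH)
        (simp_all add: bounded_linear_minus bounded_linear_ident)
  qed
  moreover have "continuous_on U (\<lambda>u. inverse (f u))"
    using Suc.prems by (auto intro!: continuous_on_inverse dest: Ck_continuous_on)
  ultimately show ?case using hv by (auto intro: differentiableI_vector)
qed

lemma Ck_sqrt:
  assumes "open U"
  shows "(\<And>u. u \<in> U \<Longrightarrow> f u > 0) \<Longrightarrow> Ck k f U \<Longrightarrow> Ck k (\<lambda>u. sqrt (f u)) U"
proof (induction k arbitrary: f)
  case 0 then show ?case by (auto intro!: continuous_on_real_sqrt)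
next
  case (Suc k)
  have hv: "((\<lambda>t. sqrt (f (u + t *\<^sub>R axis i 1))) has_vector_derivative
      inverse (sqrt (f u)) / 2 * pd f i u) (at 0)"
    if "u \<in> U" for u i
  proof -
    have f': "((\<lambda>t. f (u + t *\<^sub>R axis i 1)) has_real_derivative pd f i u) (at 0)"
      using Ck_has_pd[OF Suc.prems(2) that] by (simp add: has_real_derivative_iff_has_vector_derivative)
    have sqrt': "DERIV sqrt ((\<lambda>t. f (u + t *\<^sub>R axis i 1)) 0) :> inverse (sqrt (f u)) / 2"
      using DERIV_real_sqrt[OF Suc.prems(1)[OF that]] by simp
    have "((\<lambda>t. sqrt (f (u + t *\<^sub>R axis i 1))) has_real_derivative
        inverse (sqrt (f u)) / 2 * pd f i u) (at 0)"
      using DERIV_chain2[OF sqrt' f'] by simp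
    then
    show ?thesis by (simp add: has_real_derivative_iff_has_vector_derivative)
  qed
  have IH: "Ck k (\<lambda>u. sqrt (f u)) U" using Suc Ck_SucD by blast
  have "Ck k (pd (\<lambda>u. sqrt (f u)) i) U" for i
  proof (rule Ck_cong[OF assms(1), of "\<lambda>u. inverse (sqrt (f u)) / 2 * pd f i u"])
    show "inverse (sqrt (f u)) / 2 * pd f i u = pd (\<lambda>u. sqrt (f u)) i u" if "u \<in> U" for u
      using pd_eqI[OF hv[OF that]] by simp
    have "Ck k (\<lambda>u. inverse (sqrt (f u))) U"
      using Suc.prems(1) by (intro Ck_inverse[OF assms(1)] IH) (metis less_irrefl real_sqrt_gt_zero)
    then show "Ck k (\<lambda>u. inverse (sqrt (f u)) / 2 * pd f i u) U"
      using Suc.prems(2) by (intro Ck_mult[OF assms(1)] Ck_linear[OF assms(1), of "\<lambda>x. x / 2"])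
        (simp_all add: bounded_linear_divide)
  qed
  moreover have "continuous_on U (\<lambda>u. sqrt (f u))"
    using Suc.prems by (auto intro!: continuous_on_real_sqrt dest: Ck_continuous_on)
  ultimately show ?case using hv by (auto intro: differentiableI_vector)
qed

lemma pd_linear:
  assumes "Ck (Suc k) f U" "u \<in> U" "bounded_linear L"
  shows "pd (\<lambda>v. L (f v)) i u = L (pd f i u)"
  by (rule pd_eqI, rule bounded_linear.has_vector_derivative[OF assms(3) Ck_has_pd[OF assms(1,2)]])

lemma pd_bilinear:
  assumes "Ck (Suc k) f U" "Ck (Suc k) g U" "u \<in> U" "bounded_bilinear P"
  shows "pd (\<lambda>v. P (f v) (g v)) i u = P (f u) (pd g i u) + P (pd f i u) (g u)"
  using bounded_bilinear.has_vector_derivative[OF assms(4) Ck_has_pd[OF assms(1,3)] Ck_has_pd[OF assms(2,3)]]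
  by (intro pd_eqI) simp

lemma isCont_eventually_pos:
  fixes f :: "'a::t2_space \<Rightarrow> real"
  assumes "isCont f x" "f x > 0"
  shows "\<forall>\<^sub>F y in nhds x. f y > 0"
  using order_tendstoD(1)[OF assms(1)[unfolded isCont_def tendsto_at_iff_tendsto_nhds] assms(2)] .

lemma has_vector_derivative_line: "((\<lambda>t. R + t *\<^sub>R v) has_vector_derivative v) (at x)"
  by (auto intro!: derivative_eq_intros)

section \<open>Symmetry of second partial derivatives\<close>

lemma second_difference_mean_value:
  fixes f :: "real^'m \<Rightarrow> real"
  assumes f: "Ck 2 f U" and t: "0 < t"
    and square: "\<And>a b. 0 \<le> a \<Longrightarrow> a \<le> t \<Longrightarrow> 0 \<le> b \<Longrightarrow> b \<le> t \<Longrightarrow>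
                   u + a *\<^sub>R axis i 1 + b *\<^sub>R axis j 1 \<in> U"
  obtains \<xi> \<eta> where "0 < \<xi>" "\<xi> < t" "0 < \<eta>" "\<eta> < t"
    "(f (u + t *\<^sub>R axis j 1 + t *\<^sub>R axis i 1) - f (u + t *\<^sub>R axis i 1)
        - f (u + t *\<^sub>R axis j 1) + f u) / t\<^sup>2
      = pd (pd f i) j (u + \<xi> *\<^sub>R axis i 1 + \<eta> *\<^sub>R axis j 1)"
proof -
  define e1 where "e1 = (axis i 1 :: real^'m)"
  define e2 where "e2 = (axis j 1 :: real^'m)"
  have f1: "Ck (Suc 0) (pd f i) U" using f by (simp add: numeral_2_eq_2)
  have f0: "Ck (Suc 0) f U" using f Ck_SucD by (simp add: numeral_2_eq_2)
  define g where "g s = f ((u + t *\<^sub>R e2) + s *\<^sub>R e1) - f (u + s *\<^sub>R e1)" for s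
  have "DERIV g s :> pd f i ((u + t *\<^sub>R e2) + s *\<^sub>R e1) - pd f i (u + s *\<^sub>R e1)"
    if "0 \<le> s" "s \<le> t" for s
  proof -
    have a: "(u + t *\<^sub>R e2) + s *\<^sub>R e1 \<in> U"
      using square[of s t] that t by (simp add: e1_def e2_def algebra_simps)
    have b: "u + s *\<^sub>R e1 \<in> U" using square[of s 0] that t by (simp add: e1_def)
    show ?thesis unfolding g_def e1_def
      by (intro derivative_intros Ck_line_has_real_derivative[OF f0])
        (use a b in \<open>simp_all add: e1_def\<close>)
  qed
  from MVT2[OF t this] obtain \<xi> where \<xi>: "0 < \<xi>" "\<xi> < t"
    "g t - g 0 = (t - 0) * (pd f i ((u + t *\<^sub>R e2) + \<xi> *\<^sub>R e1) - pd f i (u + \<xi> *\<^sub>R e1))"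
    by auto
  define h where "h s = pd f i ((u + \<xi> *\<^sub>R e1) + s *\<^sub>R e2)" for s
  have "DERIV h s :> pd (pd f i) j ((u + \<xi> *\<^sub>R e1) + s *\<^sub>R e2)" if "0 \<le> s" "s \<le> t" for s
  proof -
    have "(u + \<xi> *\<^sub>R e1) + s *\<^sub>R e2 \<in> U" using square[of \<xi> s] that \<xi> by (simp add: e1_def e2_def)
    then show ?thesis unfolding h_def e2_def
      by (intro Ck_line_has_real_derivative[OF f1]) (simp add: e2_def)
  qed
  from MVT2[OF t this] obtain \<eta> where \<eta>: "0 < \<eta>" "\<eta> < t"
    "h t - h 0 = (t - 0) * pd (pd f i) j ((u + \<xi> *\<^sub>R e1) + \<eta> *\<^sub>R e2)"
    by auto
  have "f (u + t *\<^sub>R e2 + t *\<^sub>R e1) - f (u + t *\<^sub>R e1) - f (u + t *\<^sub>R e2) + f u = g t - g 0"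
    by (simp add: g_def)
  also have "\<dots> = t * (h t - h 0)" using \<xi>(3) by (simp add: h_def algebra_simps)
  also have "\<dots> = t\<^sup>2 * pd (pd f i) j (u + \<xi> *\<^sub>R e1 + \<eta> *\<^sub>R e2)"
    using \<eta>(3) by (simp add: power2_eq_square)
  finally show ?thesis
    using that[OF \<xi>(1,2) \<eta>(1,2)] t by (simp add: e1_def e2_def)
qed

lemma dist_add_axes_le:
  fixes u :: "real^'m"
  assumes "0 \<le> a" "0 \<le> b"
  shows "dist (u + a *\<^sub>R axis i 1 + b *\<^sub>R axis j 1) u \<le> a + b"
proof -
  have "dist (u + a *\<^sub>R axis i 1 + b *\<^sub>R axis j 1) u = norm (a *\<^sub>R axis i 1 + b *\<^sub>R axis j 1 :: real^'m)"
    by (simp add: dist_norm add.assoc)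
  also have "\<dots> \<le> a + b"
    using norm_triangle_ineq[of "a *\<^sub>R axis i 1" "b *\<^sub>R axis j 1 :: real^'m"] assms by simp
  finally show ?thesis .
qed

lemma second_difference_tendsto_pd_pd:
  fixes f :: "real^'m \<Rightarrow> real"
  assumes U: "open U" and f: "Ck 2 f U" and u: "u \<in> U"
  shows "((\<lambda>t. (f (u + t *\<^sub>R axis j 1 + t *\<^sub>R axis i 1) - f (u + t *\<^sub>R axis i 1)
              - f (u + t *\<^sub>R axis j 1) + f u) / t\<^sup>2) \<longlongrightarrow> pd (pd f i) j u) (at_right 0)"
  unfolding tendsto_iff
proof (intro allI impI)
  fix \<epsilon> :: real assume "\<epsilon> > 0"
  obtain d where d: "d > 0" "cball u d \<subseteq> U" using U u open_contains_cball by blast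
  have "continuous_on U (pd (pd f i) j)" using f by (simp add: numeral_2_eq_2)
  then have "continuous (at u) (pd (pd f i) j)" using U u continuous_on_eq_continuous_at by blast
  with \<open>\<epsilon> > 0\<close> obtain d' where d': "d' > 0"
    "\<And>y. dist y u < d' \<Longrightarrow> dist (pd (pd f i) j y) (pd (pd f i) j u) < \<epsilon>"
    unfolding continuous_at_eps_delta by blast
  show "\<forall>\<^sub>F t in at_right 0. dist ((f (u + t *\<^sub>R axis j 1 + t *\<^sub>R axis i 1) - f (u + t *\<^sub>R axis i 1)
          - f (u + t *\<^sub>R axis j 1) + f u) / t\<^sup>2) (pd (pd f i) j u) < \<epsilon>"
    unfolding eventually_at_right_field
  proof (intro exI[of _ "min (d/2) (d'/2)"] conjI allI impI)
    show "0 < min (d/2) (d'/2)" using d d' by simp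
    fix t :: real assume t: "0 < t" "t < min (d/2) (d'/2)"
    have "u + a *\<^sub>R axis i 1 + b *\<^sub>R axis j 1 \<in> U"
      if "0 \<le> a" "a \<le> t" "0 \<le> b" "b \<le> t" for a b
    proof -
      have "dist u (u + a *\<^sub>R axis i 1 + b *\<^sub>R axis j 1) \<le> a + b"
        using dist_add_axes_le[where u=u and i=i and j=j] that by (simp add: dist_commute)
      then have "dist u (u + a *\<^sub>R axis i 1 + b *\<^sub>R axis j 1) \<le> d" using that t by linarith
      with d(2) show ?thesis by auto
    qed
    then obtain \<xi> \<eta> where "0 < \<xi>" "\<xi> < t" "0 < \<eta>" "\<eta> < t" and mean:
      "(f (u + t *\<^sub>R axis j 1 + t *\<^sub>R axis i 1) - f (u + t *\<^sub>R axis i 1)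
          - f (u + t *\<^sub>R axis j 1) + f u) / t\<^sup>2
        = pd (pd f i) j (u + \<xi> *\<^sub>R axis i 1 + \<eta> *\<^sub>R axis j 1)"
      using second_difference_mean_value[OF f t(1)] by blast
    moreover have "dist (u + \<xi> *\<^sub>R axis i 1 + \<eta> *\<^sub>R axis j 1) u < d'"
      using dist_add_axes_le[where u=u and i=i and j=j and a=\<xi> and b=\<eta>] \<open>0 < \<xi>\<close> \<open>\<xi> < t\<close> \<open>0 < \<eta>\<close> \<open>\<eta> < t\<close> t(2) by linarith
    ultimately show "dist ((f (u + t *\<^sub>R axis j 1 + t *\<^sub>R axis i 1) - f (u + t *\<^sub>R axis i 1)
          - f (u + t *\<^sub>R axis j 1) + f u) / t\<^sup>2) (pd (pd f i) j u) < \<epsilon>"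
      using d'(2) by simp
  qed
qed

lemma pd_pd_commute_real:
  fixes f :: "real^'m \<Rightarrow> real"
  assumes "open U" "Ck 2 f U" "u \<in> U"
  shows "pd (pd f i) j u = pd (pd f j) i u"
proof -
  have "(\<lambda>t. (f (u + t *\<^sub>R axis i 1 + t *\<^sub>R axis j 1) - f (u + t *\<^sub>R axis j 1)
              - f (u + t *\<^sub>R axis i 1) + f u) / t\<^sup>2) =
        (\<lambda>t. (f (u + t *\<^sub>R axis j 1 + t *\<^sub>R axis i 1) - f (u + t *\<^sub>R axis i 1)
              - f (u + t *\<^sub>R axis j 1) + f u) / t\<^sup>2)"
    by (rule ext) (simp add: add.commute add.left_commute)
  with second_difference_tendsto_pd_pd[OF assms, where i=j and j=i]
  have "((\<lambda>t. (f (u + t *\<^sub>R axis j 1 + t *\<^sub>R axis i 1) - f (u + t *\<^sub>R axis i 1)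
              - f (u + t *\<^sub>R axis j 1) + f u) / t\<^sup>2) \<longlongrightarrow> pd (pd f j) i u) (at_right 0)"
    by simp
  from tendsto_unique[OF trivial_limit_at_right_real
      second_difference_tendsto_pd_pd[OF assms, where i=i and j=j] this]
  show ?thesis .
qed

lemma pd_pd_commute:
  fixes f :: "real^'m \<Rightarrow> 'b::euclidean_space"
  assumes U: "open U" and f: "Ck 2 f U" and u: "u \<in> U"
  shows "pd (pd f i) j u = pd (pd f j) i u"
proof (rule euclidean_eqI)
  fix b :: 'b
  have L: "bounded_linear (\<lambda>x::'b. x \<bullet> b)" by (rule bounded_linear_inner_left)
  have component: "pd (pd (\<lambda>v. f v \<bullet> b) i) j u = pd (pd f i) j u \<bullet> b" for i j
  proof -
    have "pd (pd (\<lambda>v. f v \<bullet> b) i) j u = pd (\<lambda>v. pd f i v \<bullet> b) j u"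
      using f by (intro pd_cong[OF U u] pd_linear[OF _ _ L, of 1]) (simp_all add: numeral_2_eq_2)
    also have "\<dots> = pd (pd f i) j u \<bullet> b"
      using f by (intro pd_linear[OF _ u L, of 0]) (simp add: numeral_2_eq_2)
    finally show ?thesis .
  qed
  show "pd (pd f i) j u \<bullet> b = pd (pd f j) i u \<bullet> b"
    using pd_pd_commute_real[OF U Ck_linear[OF U L f] u, of i j] component by simp
qed

section \<open>Differentiability of the inverse matrix\<close>

lemma differentiable_prod:
  fixes f :: "'i \<Rightarrow> real \<Rightarrow> real"
  assumes "\<And>a. a \<in> S \<Longrightarrow> f a differentiable (at x)"
  shows "(\<lambda>t. \<Prod>a\<in>S. f a t) differentiable (at x)"
  using assms
proof (induction S rule: infinite_finite_induct)
  case (insert a S)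
  then show ?case by (simp add: differentiable_mult)
qed simp_all

lemma differentiable_det:
  fixes M :: "real \<Rightarrow> real^'n^'n"
  assumes "\<And>i j. (\<lambda>t. M t $ i $ j) differentiable (at x)"
  shows "(\<lambda>t. det (M t)) differentiable (at x)"
  unfolding det_def
proof (intro differentiable_sum ballI)
  fix p assume "p \<in> {p. p permutes (UNIV :: 'n set)}"
  show "(\<lambda>t. of_int (sign p) * (\<Prod>i\<in>UNIV. M t $ i $ p i)) differentiable (at x)"
    using assms by (intro differentiable_mult differentiable_const differentiable_prod)
qed (simp add: finite_permutations)

lemma matrix_inv_right_left:
  fixes A :: "real^'n^'n"
  assumes "invertible A"
  shows "A ** matrix_inv A = mat 1" "matrix_inv A ** A = mat 1"
proof -
  have "\<exists>A'. A ** A' = mat 1 \<and> A' ** A = mat 1" using assms by (simp add: invertible_def)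
  from someI_ex[OF this] show "A ** matrix_inv A = mat 1" "matrix_inv A ** A = mat 1"
    by (simp_all add: matrix_inv_def)
qed

lemma matrix_inv_cramer:
  fixes A :: "real^'n^'n"
  assumes "det A \<noteq> 0"
  shows "matrix_inv A $ l $ k = det (\<chi> i j. if j = l then axis k 1 $ i else A $ i $ j) / det A"
proof -
  have "A *v (matrix_inv A *v axis k 1) = axis k 1"
    using assms by (simp add: matrix_vector_mul_assoc matrix_inv_right_left(1) invertible_det_nz)
  then have "matrix_inv A *v axis k 1
      = (\<chi> l. det (\<chi> i j. if j = l then axis k 1 $ i else A $ i $ j) / det A)"
    using cramer[OF assms] by blast
  moreover have "(matrix_inv A *v axis k 1) $ l = matrix_inv A $ l $ k"
    by (simp add: matrix_vector_mult_basis column_def)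
  ultimately show ?thesis by simp
qed

lemma differentiable_matrix_inv:
  fixes M :: "real \<Rightarrow> real^'n^'n"
  assumes M: "\<And>i j. (\<lambda>t. M t $ i $ j) differentiable (at 0)" and det0: "det (M 0) \<noteq> 0"
  shows "(\<lambda>t. matrix_inv (M t) $ l $ k) differentiable (at 0)"
proof -
  let ?N = "\<lambda>t. \<chi> i j. if j = l then axis k 1 $ i else M t $ i $ j"
  have det_M: "(\<lambda>t. det (M t)) differentiable (at 0)" by (rule differentiable_det[OF M])
  have "(\<lambda>t. ?N t $ i $ j) differentiable (at 0)" for i j
    by (cases "j = l") (simp_all add: M)
  then have "(\<lambda>t. det (?N t)) differentiable (at 0)"
    by (rule differentiable_det)
  then have cramer: "(\<lambda>t. det (?N t) / det (M t)) differentiable (at 0)"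
    using det_M det0 by (rule differentiable_divide)
  have "isCont (\<lambda>t. det (M t)) 0" using det_M by (rule differentiable_imp_continuous_within)
  from continuous_at_avoid[OF this det0] obtain e where
    "e > 0" "\<And>y. dist 0 y < e \<Longrightarrow> det (M y) \<noteq> 0"
    by blast
  then show ?thesis
    using differentiable_transform_within[OF cramer, of e]
    by (simp add: matrix_inv_cramer dist_commute)
qed

section \<open>Hypersurfaces of a Euclidean sphere\<close>

definition christoffel1 :: "(real^'m \<Rightarrow> real^'m^'m) \<Rightarrow> 'm \<Rightarrow> 'm \<Rightarrow> 'm \<Rightarrow> real^'m \<Rightarrow> real" where
  "christoffel1 G k i j u = (1/2) *
     (pd (\<lambda>v. G v $ j $ k) i u + pd (\<lambda>v. G v $ i $ k) j u - pd (\<lambda>v. G v $ i $ j) k u)"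

definition christoffel2 :: "(real^'m \<Rightarrow> real^'m^'m) \<Rightarrow> 'm \<Rightarrow> 'm \<Rightarrow> 'm \<Rightarrow> real^'m \<Rightarrow> real" where
  "christoffel2 G l i j u = (\<Sum>k\<in>UNIV. matrix_inv (G u) $ l $ k * christoffel1 G k i j u)"

definition riemann_up :: "(real^'m \<Rightarrow> real^'m^'m) \<Rightarrow> 'm \<Rightarrow> 'm \<Rightarrow> 'm \<Rightarrow> 'm \<Rightarrow> real^'m \<Rightarrow> real" where
  "riemann_up G m j k l u =
     pd (christoffel2 G m l j) k u - pd (christoffel2 G m k j) l u
     + (\<Sum>p\<in>UNIV. christoffel2 G m k p u * christoffel2 G p l j u
                  - christoffel2 G m l p u * christoffel2 G p k j u)"

definition riemann :: "(real^'m \<Rightarrow> real^'m^'m) \<Rightarrow> 'm \<Rightarrow> 'm \<Rightarrow> 'm \<Rightarrow> 'm \<Rightarrow> real^'m \<Rightarrow> real" where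
  "riemann G i j k l u = (\<Sum>m\<in>UNIV. G u $ i $ m * riemann_up G m j k l u)"

lemma riem_eq_riemann_ind_metric: "riem g r \<phi> = riemann (ind_metric g r \<phi>)"
proof -
  have chr1: "chr1 g r \<phi> = christoffel1 (ind_metric g r \<phi>)"
    by (simp add: fun_eq_iff chr1_def christoffel1_def)
  have chr2: "chr2 g r \<phi> = christoffel2 (ind_metric g r \<phi>)"
    by (simp add: fun_eq_iff chr2_def christoffel2_def chr1)
  have "riem_up g r \<phi> = riemann_up (ind_metric g r \<phi>)"
    by (simp add: fun_eq_iff riem_up_def riemann_up_def chr2)
  then show ?thesis by (simp add: fun_eq_iff riem_def riemann_def)
qed

locale sphere_hypersurface = B: bounded_bilinear B
  for B :: "(real^'m) \<times> real \<Rightarrow> (real^'m) \<times> real \<Rightarrow> real" +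
  fixes U :: "(real^'m) set" and \<psi> :: "real^'m \<Rightarrow> (real^'m) \<times> real"
    and c :: real and G :: "real^'m \<Rightarrow> real^'m^'m"
  assumes open_U: "open U" and C3_psi: "Ck 3 \<psi> U"
    and B_commute: "\<And>x y. B x y = B y x" and B_pos: "\<And>x. x \<noteq> 0 \<Longrightarrow> B x x > 0"
    and c_pos: "c > 0" and on_sphere: "\<And>u. u \<in> U \<Longrightarrow> B (\<psi> u) (\<psi> u) = c"
    and immersion: "\<And>u a. u \<in> U \<Longrightarrow> (\<Sum>i\<in>UNIV. a i *\<^sub>R pd \<psi> i u) = 0 \<Longrightarrow> \<forall>i. a i = 0"
    and G_eq: "\<And>u. u \<in> U \<Longrightarrow> G u = (\<chi> i j. B (pd \<psi> i u) (pd \<psi> j u))"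
begin

lemma Ck_psi: "Ck (Suc (Suc (Suc 0))) \<psi> U"
  using C3_psi by (simp add: numeral_3_eq_3)

lemma Ck_pd_psi: "Ck (Suc (Suc 0)) (pd \<psi> i) U"
  using Ck_psi by simp

lemmas Ck2_psi = Ck_SucD[OF Ck_psi]
lemmas Ck1_psi = Ck_SucD[OF Ck2_psi]
lemmas Ck1_pd_psi = Ck_SucD[OF Ck_pd_psi]

lemmas B_linear_simps = B.add_left B.diff_left B.sum_left B.zero_left B.scaleR_left[simplified]
  B.add_right B.diff_right B.sum_right B.zero_right B.scaleR_right[simplified]

lemma pd_pd_psi_commute: "u \<in> U \<Longrightarrow> pd (pd \<psi> i) j u = pd (pd \<psi> j) i u"
  using Ck2_psi by (intro pd_pd_commute[OF open_U]) (simp_all add: numeral_2_eq_2)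

lemma pd3_psi_commute: "u \<in> U \<Longrightarrow> pd (pd (pd \<psi> l) j) k u = pd (pd (pd \<psi> k) j) l u"
proof -
  assume u: "u \<in> U"
  have "pd (pd (pd \<psi> l) j) k u = pd (pd (pd \<psi> j) l) k u"
    using pd_cong[OF open_U u, of "pd (pd \<psi> l) j" "pd (pd \<psi> j) l"] pd_pd_psi_commute by auto
  also have "\<dots> = pd (pd (pd \<psi> j) k) l u"
    using Ck_pd_psi by (intro pd_pd_commute[OF open_U _ u]) (simp add: numeral_2_eq_2)
  also have "\<dots> = pd (pd (pd \<psi> k) j) l u"
    using pd_cong[OF open_U u, of "pd (pd \<psi> j) k" "pd (pd \<psi> k) j"] pd_pd_psi_commute by auto
  finally show ?thesis .
qed

lemma G_entry: "u \<in> U \<Longrightarrow> G u $ i $ j = B (pd \<psi> i u) (pd \<psi> j u)"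
  using G_eq by simp

lemma G_commute: "u \<in> U \<Longrightarrow> G u $ i $ j = G u $ j $ i"
  using G_entry B_commute by simp

lemma Ck_G_entry: "Ck (Suc (Suc 0)) (\<lambda>v. G v $ i $ j) U"
  using G_entry by (intro Ck_cong[OF open_U _ Ck_bilinear[OF open_U B.bounded_bilinear_axioms Ck_pd_psi Ck_pd_psi]])
    simp

lemma pd_G_entry:
  "u \<in> U \<Longrightarrow> pd (\<lambda>v. G v $ i $ j) k u =
     B (pd \<psi> i u) (pd (pd \<psi> j) k u) + B (pd (pd \<psi> i) k u) (pd \<psi> j u)"
proof -
  assume u: "u \<in> U"
  have "pd (\<lambda>v. G v $ i $ j) k u = pd (\<lambda>v. B (pd \<psi> i v) (pd \<psi> j v)) k u"
    using G_entry by (intro pd_cong[OF open_U u]) simp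
  also have "\<dots> = B (pd \<psi> i u) (pd (pd \<psi> j) k u) + B (pd (pd \<psi> i) k u) (pd \<psi> j u)"
    by (rule pd_bilinear[OF Ck1_pd_psi Ck1_pd_psi u B.bounded_bilinear_axioms])
  finally show ?thesis .
qed

lemma christoffel1_eq: "u \<in> U \<Longrightarrow> christoffel1 G k i j u = B (pd \<psi> k u) (pd (pd \<psi> i) j u)"
proof -
  assume u: "u \<in> U"
  show ?thesis
    unfolding christoffel1_def pd_G_entry[OF u] pd_pd_psi_commute[OF u, of k i]
      pd_pd_psi_commute[OF u, of j i] pd_pd_psi_commute[OF u, of k j]
    using B_commute[of "pd \<psi> j u" "pd (pd \<psi> i) k u"] B_commute[of "pd \<psi> i u" "pd (pd \<psi> j) k u"]
      B_commute[of "pd \<psi> k u" "pd (pd \<psi> i) j u"]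
    by simp
qed

lemma B_pd_psi_psi: "u \<in> U \<Longrightarrow> B (pd \<psi> i u) (\<psi> u) = 0"
proof -
  assume u: "u \<in> U"
  have "pd (\<lambda>v. B (\<psi> v) (\<psi> v)) i u = 0" by (rule pd_eq_0_if_constant[OF open_U u on_sphere])
  moreover have "pd (\<lambda>v. B (\<psi> v) (\<psi> v)) i u = B (\<psi> u) (pd \<psi> i u) + B (pd \<psi> i u) (\<psi> u)"
    by (rule pd_bilinear[OF Ck1_psi Ck1_psi u B.bounded_bilinear_axioms])
  ultimately show ?thesis using B_commute[of "\<psi> u" "pd \<psi> i u"] by simp
qed

lemma B_psi_pd_psi: "u \<in> U \<Longrightarrow> B (\<psi> u) (pd \<psi> i u) = 0"
  using B_pd_psi_psi B_commute by metis

lemma B_pd_pd_psi_psi: "u \<in> U \<Longrightarrow> B (pd (pd \<psi> i) j u) (\<psi> u) = - G u $ i $ j"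
proof -
  assume u: "u \<in> U"
  have "pd (\<lambda>v. B (pd \<psi> i v) (\<psi> v)) j u = 0"
    by (rule pd_eq_0_if_constant[OF open_U u B_pd_psi_psi])
  moreover have "pd (\<lambda>v. B (pd \<psi> i v) (\<psi> v)) j u = B (pd \<psi> i u) (pd \<psi> j u) + B (pd (pd \<psi> i) j u) (\<psi> u)"
    by (rule pd_bilinear[OF Ck1_pd_psi Ck1_psi u B.bounded_bilinear_axioms])
  ultimately show ?thesis using G_entry[OF u] by simp
qed

lemma invertible_G: "u \<in> U \<Longrightarrow> invertible (G u)"
proof -
  assume u: "u \<in> U"
  have "x = 0" if x: "G u *v x = 0" for x
  proof -
    define w where "w = (\<Sum>j\<in>UNIV. x $ j *\<^sub>R pd \<psi> j u)"
    have "(G u *v x) $ i = B (pd \<psi> i u) w" for i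
      by (simp add: matrix_vector_mult_def w_def B_linear_simps G_entry[OF u] mult.commute)
    then have "B (pd \<psi> i u) w = 0" for i using x by simp
    then have "B w w = 0"
      by (subst (1) w_def) (simp add: B_linear_simps)
    then have "w = 0" using B_pos[of w] by (cases "w = 0") auto
    then have "\<forall>j. x $ j = 0" using immersion[OF u, of "\<lambda>j. x $ j"] by (simp add: w_def)
    then show "x = 0" by (simp add: vec_eq_iff)
  qed
  then have "\<exists>B'. B' ** G u = mat 1" using matrix_left_invertible_ker by blast
  then show ?thesis using invertible_left_inverse by blast
qed

lemma tangent_normal_span:
  assumes u: "u \<in> U"
  obtains a a0 where "y = (\<Sum>l\<in>UNIV. a $ l *\<^sub>R pd \<psi> l u) + a0 *\<^sub>R \<psi> u"
proof -
  define L where "L p = (\<Sum>l\<in>UNIV. fst p $ l *\<^sub>R pd \<psi> l u) + snd p *\<^sub>R \<psi> u"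
    for p :: "(real^'m) \<times> real"
  have lin: "linear L"
    by (rule linearI) (simp_all add: L_def algebra_simps sum.distrib scaleR_sum_right)
  have "p = 0" if "L p = 0" for p
  proof -
    have "B (L p) (\<psi> u) = 0" using that by (simp add: B_linear_simps)
    then have "snd p * c = 0"
      by (simp add: L_def B_linear_simps B_pd_psi_psi[OF u] on_sphere[OF u])
    then have s: "snd p = 0" using c_pos by simp
    then have "(\<Sum>l\<in>UNIV. fst p $ l *\<^sub>R pd \<psi> l u) = 0" using that by (simp add: L_def)
    then have "\<forall>l. fst p $ l = 0" using immersion[OF u, of "\<lambda>l. fst p $ l"] by simp
    with s show "p = 0" by (simp add: prod_eq_iff vec_eq_iff)
  qed
  then have "surj L" using linear_inj_imp_surj[OF lin] linear_injective_0[OF lin] by blast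
  then obtain p where "y = L p" by blast
  then show ?thesis unfolding L_def by (rule that)
qed

text \<open>Gauss' formula: the normal component of the second derivatives is read off from
  \<open>B (\<partial>\<^sub>i\<partial>\<^sub>j\<psi>, \<psi>) = - G\<^sub>i\<^sub>j\<close>, the tangential one from the Christoffel symbols.\<close>

lemma gauss_formula:
  assumes u: "u \<in> U"
  shows "pd (pd \<psi> i) j u = (\<Sum>l\<in>UNIV. christoffel2 G l i j u *\<^sub>R pd \<psi> l u) - (G u $ i $ j / c) *\<^sub>R \<psi> u"
proof -
  obtain a a0 where a: "pd (pd \<psi> i) j u = (\<Sum>l\<in>UNIV. a $ l *\<^sub>R pd \<psi> l u) + a0 *\<^sub>R \<psi> u"
    using tangent_normal_span[OF u] by blast
  have "B (pd (pd \<psi> i) j u) (\<psi> u) = a0 * c"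
    unfolding a by (simp add: B_linear_simps B_pd_psi_psi[OF u] on_sphere[OF u])
  then have a0: "a0 = - G u $ i $ j / c" using B_pd_pd_psi_psi[OF u, of i j] c_pos by (simp add: field_simps)
  have "(G u *v a) $ p = christoffel1 G p i j u" for p
  proof -
    have "christoffel1 G p i j u = (\<Sum>l\<in>UNIV. a $ l * B (pd \<psi> p u) (pd \<psi> l u))"
      unfolding christoffel1_eq[OF u] a by (simp add: B_linear_simps B_pd_psi_psi[OF u] B_commute[of "pd \<psi> p u" "\<psi> u"])
    also have "\<dots> = (G u *v a) $ p"
      by (simp add: matrix_vector_mult_def G_entry[OF u] mult.commute)
    finally show ?thesis by simp
  qed
  then have "G u *v a = (\<chi> p. christoffel1 G p i j u)" by (simp add: vec_eq_iff)
  then have "a = matrix_inv (G u) *v (\<chi> p. christoffel1 G p i j u)"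
    by (metis matrix_vector_mul_assoc matrix_inv_right_left(2)[OF invertible_G[OF u]] matrix_vector_mul_lid)
  then have "a $ l = christoffel2 G l i j u" for l
    by (simp add: christoffel2_def matrix_vector_mult_def)
  then show ?thesis using a a0 by simp
qed

lemma christoffel2_commute: "u \<in> U \<Longrightarrow> christoffel2 G l i j u = christoffel2 G l j i u"
  unfolding christoffel2_def using christoffel1_eq pd_pd_psi_commute by simp

lemma Ck_christoffel1: "Ck (Suc 0) (christoffel1 G k i j) U"
proof -
  have "Ck (Suc 0) (pd (\<lambda>v. G v $ a $ b) d) U" for a b d using Ck_G_entry by simp
  then have "Ck (Suc 0) (\<lambda>u. (1/2) * (pd (\<lambda>v. G v $ j $ k) i u + pd (\<lambda>v. G v $ i $ k) j u
      - pd (\<lambda>v. G v $ i $ j) k u)) U"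
    by (intro Ck_mult[OF open_U Ck_const] Ck_diff[OF open_U] Ck_add[OF open_U])
  then show ?thesis by (simp add: christoffel1_def[abs_def])
qed

lemma christoffel2_has_real_derivative:
  assumes u: "u \<in> U"
  shows "((\<lambda>t. christoffel2 G l i j (u + t *\<^sub>R axis k 1)) has_real_derivative
           pd (christoffel2 G l i j) k u) (at 0)"
proof -
  have "(\<lambda>t. G (u + t *\<^sub>R axis k 1) $ a $ b) differentiable (at 0)" for a b
    using Ck_has_pd[OF Ck_G_entry u] by (rule differentiableI_vector)
  moreover have "det (G (u + 0 *\<^sub>R axis k 1)) \<noteq> 0" using invertible_G[OF u] by (simp add: invertible_det_nz)
  ultimately have "(\<lambda>t. matrix_inv (G (u + t *\<^sub>R axis k 1)) $ l $ k') differentiable (at 0)" for k'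
    using differentiable_matrix_inv[of "\<lambda>t. G (u + t *\<^sub>R axis k 1)"] by simp
  moreover have "(\<lambda>t. christoffel1 G k' i j (u + t *\<^sub>R axis k 1)) differentiable (at 0)" for k'
    using Ck_has_pd[OF Ck_christoffel1 u] by (rule differentiableI_vector)
  ultimately have "(\<lambda>t. christoffel2 G l i j (u + t *\<^sub>R axis k 1)) differentiable (at 0)"
    unfolding christoffel2_def by (intro differentiable_sum ballI differentiable_mult) simp_all
  then show ?thesis
    unfolding pd_def has_real_derivative_iff_has_vector_derivative
    by (simp add: vector_derivative_works[symmetric])
qed

lemma pd_gauss_formula:
  assumes u: "u \<in> U"
  shows "pd (pd (pd \<psi> i) j) k u =
    (\<Sum>l\<in>UNIV. christoffel2 G l i j u *\<^sub>R pd (pd \<psi> l) k u + pd (christoffel2 G l i j) k u *\<^sub>R pd \<psi> l u)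
    - ((G u $ i $ j / c) *\<^sub>R pd \<psi> k u + (pd (\<lambda>v. G v $ i $ j) k u / c) *\<^sub>R \<psi> u)"
proof -
  define T where "T v = (\<Sum>l\<in>UNIV. christoffel2 G l i j v *\<^sub>R pd \<psi> l v) - (G v $ i $ j / c) *\<^sub>R \<psi> v" for v
  have "pd (pd (pd \<psi> i) j) k u = pd T k u"
    using gauss_formula by (intro pd_cong[OF open_U u]) (simp add: T_def)
  also have "\<dots> = (\<Sum>l\<in>UNIV. christoffel2 G l i j u *\<^sub>R pd (pd \<psi> l) k u
        + pd (christoffel2 G l i j) k u *\<^sub>R pd \<psi> l u)
      - ((G u $ i $ j / c) *\<^sub>R pd \<psi> k u + (pd (\<lambda>v. G v $ i $ j) k u / c) *\<^sub>R \<psi> u)"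
  proof (rule pd_eqI)
    have "((\<lambda>t. christoffel2 G l i j (u + t *\<^sub>R axis k 1) *\<^sub>R pd \<psi> l (u + t *\<^sub>R axis k 1))
        has_vector_derivative
          christoffel2 G l i j u *\<^sub>R pd (pd \<psi> l) k u + pd (christoffel2 G l i j) k u *\<^sub>R pd \<psi> l u) (at 0)"
      for l
      using has_vector_derivative_scaleR[OF christoffel2_has_real_derivative[OF u] Ck_has_pd[OF Ck1_pd_psi u]]
      by simp
    moreover have "((\<lambda>t. G (u + t *\<^sub>R axis k 1) $ i $ j / c) has_real_derivative
        pd (\<lambda>v. G v $ i $ j) k u / c) (at 0)"
      using Ck_has_pd[OF Ck_G_entry u] unfolding has_real_derivative_iff_has_vector_derivative[symmetric]
      by (rule DERIV_cdivide)
    from has_vector_derivative_scaleR[OF this Ck_has_pd[OF Ck1_psi u]]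
    have "((\<lambda>t. (G (u + t *\<^sub>R axis k 1) $ i $ j / c) *\<^sub>R \<psi> (u + t *\<^sub>R axis k 1)) has_vector_derivative
        (G u $ i $ j / c) *\<^sub>R pd \<psi> k u + (pd (\<lambda>v. G v $ i $ j) k u / c) *\<^sub>R \<psi> u) (at 0)"
      by simp
    ultimately show "((\<lambda>t. T (u + t *\<^sub>R axis k 1)) has_vector_derivative
      (\<Sum>l\<in>UNIV. christoffel2 G l i j u *\<^sub>R pd (pd \<psi> l) k u + pd (christoffel2 G l i j) k u *\<^sub>R pd \<psi> l u)
       - ((G u $ i $ j / c) *\<^sub>R pd \<psi> k u + (pd (\<lambda>v. G v $ i $ j) k u / c) *\<^sub>R \<psi> u)) (at 0)"
      unfolding T_def by (intro has_vector_derivative_diff has_vector_derivative_sum)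
  qed
  finally show ?thesis .
qed

lemma B_pd_pd_psi_pd_psi:
  "u \<in> U \<Longrightarrow> B (pd (pd \<psi> l) k u) (pd \<psi> p u) = (\<Sum>q\<in>UNIV. christoffel2 G q l k u * G u $ q $ p)"
  by (simp add: gauss_formula B_linear_simps B_psi_pd_psi G_entry)

lemma B_pd3_psi_pd_psi:
  "u \<in> U \<Longrightarrow> B (pd (pd (pd \<psi> i) j) k u) (pd \<psi> p u) =
     (\<Sum>l\<in>UNIV. christoffel2 G l i j u * (\<Sum>q\<in>UNIV. christoffel2 G q l k u * G u $ q $ p))
     + (\<Sum>l\<in>UNIV. pd (christoffel2 G l i j) k u * G u $ l $ p) - G u $ i $ j * G u $ k $ p / c"
  by (simp add: pd_gauss_formula B_linear_simps B_psi_pd_psi B_pd_pd_psi_pd_psi G_entry sum.distrib)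

lemma contract_christoffel2_products:
  assumes u: "u \<in> U"
  shows "(\<Sum>m\<in>UNIV. G u $ i $ m * (\<Sum>p\<in>UNIV. christoffel2 G m k p u * christoffel2 G p l j u))
       = (\<Sum>m\<in>UNIV. christoffel2 G m l j u * (\<Sum>q\<in>UNIV. christoffel2 G q m k u * G u $ q $ i))"
proof -
  have "(\<Sum>m\<in>UNIV. G u $ i $ m * (\<Sum>p\<in>UNIV. christoffel2 G m k p u * christoffel2 G p l j u))
      = (\<Sum>m\<in>UNIV. \<Sum>p\<in>UNIV. G u $ i $ m * christoffel2 G m k p u * christoffel2 G p l j u)"
    by (simp add: sum_distrib_left mult.assoc)
  also have "\<dots> = (\<Sum>p\<in>UNIV. \<Sum>m\<in>UNIV. G u $ i $ m * christoffel2 G m k p u * christoffel2 G p l j u)"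
    by (rule sum.swap)
  also have "\<dots> = (\<Sum>p\<in>UNIV. \<Sum>m\<in>UNIV. christoffel2 G p l j u * (christoffel2 G m p k u * G u $ m $ i))"
    by (intro sum.cong refl) (simp add: G_commute[OF u, of i] christoffel2_commute[OF u, of _ k])
  finally show ?thesis by (simp add: sum_distrib_left)
qed

text \<open>Gauss' equation: compare the tangential components of \<open>\<partial>\<^sub>k\<partial>\<^sub>j\<partial>\<^sub>l\<psi> = \<partial>\<^sub>l\<partial>\<^sub>j\<partial>\<^sub>k\<psi>\<close>;
  the curvature term comes from differentiating the normal part \<open>- G\<^sub>i\<^sub>j \<psi> / c\<close> of Gauss' formula.\<close>

lemma riemann_eq:
  assumes u: "u \<in> U"
  shows "riemann G i j k l u = (1/c) * (G u $ i $ k * G u $ j $ l - G u $ i $ l * G u $ j $ k)"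
proof -
  define \<Gamma> where "\<Gamma> a b d = christoffel2 G a b d u" for a b d
  define d\<Gamma> where "d\<Gamma> a b d e = pd (christoffel2 G a b d) e u" for a b d e
  define \<gamma> where "\<gamma> a b = G u $ a $ b" for a b
  have \<gamma>_commute: "\<gamma> a b = \<gamma> b a" for a b unfolding \<gamma>_def by (rule G_commute[OF u])
  define A1 where "A1 = (\<Sum>m\<in>UNIV. \<Gamma> m l j * (\<Sum>q\<in>UNIV. \<Gamma> q m k * \<gamma> q i))"
  define A2 where "A2 = (\<Sum>m\<in>UNIV. \<Gamma> m k j * (\<Sum>q\<in>UNIV. \<Gamma> q m l * \<gamma> q i))"
  define D1 where "D1 = (\<Sum>m\<in>UNIV. d\<Gamma> m l j k * \<gamma> m i)"
  define D2 where "D2 = (\<Sum>m\<in>UNIV. d\<Gamma> m k j l * \<gamma> m i)"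
  have "A1 + D1 - \<gamma> l j * \<gamma> k i / c = A2 + D2 - \<gamma> k j * \<gamma> l i / c"
    using B_pd3_psi_pd_psi[OF u, of l j k i] B_pd3_psi_pd_psi[OF u, of k j l i] pd3_psi_commute[OF u, of l j k]
    by (simp add: A1_def A2_def D1_def D2_def \<Gamma>_def d\<Gamma>_def \<gamma>_def)
  moreover have "riemann G i j k l u = D1 - D2 + A1 - A2"
  proof -
    have "riemann G i j k l u = (\<Sum>m\<in>UNIV. \<gamma> i m * (d\<Gamma> m l j k - d\<Gamma> m k j l
        + (\<Sum>p\<in>UNIV. \<Gamma> m k p * \<Gamma> p l j - \<Gamma> m l p * \<Gamma> p k j)))"
      unfolding riemann_def riemann_up_def \<gamma>_def d\<Gamma>_def \<Gamma>_def ..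
    also have "\<dots> = D1 - D2 + ((\<Sum>m\<in>UNIV. \<gamma> i m * (\<Sum>p\<in>UNIV. \<Gamma> m k p * \<Gamma> p l j))
          - (\<Sum>m\<in>UNIV. \<gamma> i m * (\<Sum>p\<in>UNIV. \<Gamma> m l p * \<Gamma> p k j)))"
      unfolding D1_def D2_def
      by (simp add: algebra_simps sum.distrib sum_subtractf sum_distrib_left \<gamma>_commute[of i])
    also have "\<dots> = D1 - D2 + A1 - A2"
      using contract_christoffel2_products[OF u, of i k l j] contract_christoffel2_products[OF u, of i l k j]
      by (simp add: A1_def A2_def \<Gamma>_def \<gamma>_def)
    finally show ?thesis .
  qed
  ultimately have "riemann G i j k l u = (\<gamma> l j * \<gamma> k i - \<gamma> k j * \<gamma> l i) / c"
    by (simp add: diff_divide_distrib algebra_simps)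
  then show ?thesis
    unfolding \<gamma>_def using G_commute[OF u] by (simp add: field_simps)
qed

end

section \<open>The Finsleroid metric function in the variables \<open>q\<close> and \<open>Z\<close>\<close>

definition B_qz :: "real \<Rightarrow> real \<Rightarrow> real \<Rightarrow> real" where
  "B_qz g q z = z\<^sup>2 + g * q * z + q\<^sup>2"

definition A_qz :: "real \<Rightarrow> real \<Rightarrow> real \<Rightarrow> real" where
  "A_qz g q z = z + g * q / 2"

definition J2_qz :: "real \<Rightarrow> real \<Rightarrow> real \<Rightarrow> real" where
  "J2_qz g q z = exp (fG g * arctan (A_qz g q z / (fh g * q)))"

lemma
  assumes "-2 < g" "g < 2"
  shows fh_square: "(fh g)\<^sup>2 = 1 - g\<^sup>2 / 4" and fh_pos: "fh g > 0"
proof -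
  have "(2 - g) * (2 + g) > 0" using assms by simp
  then have "g\<^sup>2 < 4" by (simp add: power2_eq_square algebra_simps)
  then show "(fh g)\<^sup>2 = 1 - g\<^sup>2 / 4" "fh g > 0" by (simp_all add: fh_def)
qed

lemma B_qz_eq_sum_squares:
  assumes "-2 < g" "g < 2"
  shows "B_qz g q z = (A_qz g q z)\<^sup>2 + (fh g * q)\<^sup>2"
  unfolding B_qz_def A_qz_def power_mult_distrib fh_square[OF assms]
  by (simp add: power2_eq_square field_simps)

lemma B_qz_pos:
  assumes "-2 < g" "g < 2" "q > 0"
  shows "B_qz g q z > 0"
  using B_qz_eq_sum_squares[OF assms(1,2), of q z] fh_pos[OF assms(1,2)] assms(3)
  by (simp add: add_nonneg_pos)

lemma B_qz_deriv:
  assumes q: "DERIV qc 0 :> q'" and z: "DERIV zc 0 :> z'"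
  shows "DERIV (\<lambda>t. B_qz g (qc t) (zc t)) 0 :> 2 * zc 0 * z' + g * (q' * zc 0 + qc 0 * z') + 2 * qc 0 * q'"
proof -
  have "DERIV (\<lambda>t. zc t * zc t + g * qc t * zc t + qc t * qc t) 0 :>
      2 * zc 0 * z' + g * (q' * zc 0 + qc 0 * z') + 2 * qc 0 * q'"
    by (rule DERIV_cong[OF DERIV_add[OF DERIV_add[OF DERIV_mult[OF z z]
          DERIV_mult[OF DERIV_cmult[OF q, of g] z]] DERIV_mult[OF q q]]])
      (simp add: algebra_simps)
  then show ?thesis unfolding B_qz_def power2_eq_square .
qed

lemma J2_qz_deriv:
  assumes g: "-2 < g" "g < 2" and q: "DERIV qc 0 :> q'" and z: "DERIV zc 0 :> z'" and q0: "qc 0 > 0"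
  shows "DERIV (\<lambda>t. J2_qz g (qc t) (zc t)) 0 :>
     J2_qz g (qc 0) (zc 0) * (g * (qc 0 * z' - zc 0 * q') / B_qz g (qc 0) (zc 0))"
proof -
  define h where "h = fh g"
  have h: "h > 0" using fh_pos[OF g] by (simp add: h_def)
  have B: "B_qz g (qc 0) (zc 0) = (A_qz g (qc 0) (zc 0))\<^sup>2 + (h * qc 0)\<^sup>2"
    using B_qz_eq_sum_squares[OF g] by (simp add: h_def)
  have Bp: "B_qz g (qc 0) (zc 0) > 0" using B_qz_pos[OF g q0] .
  define y where "y = A_qz g (qc 0) (zc 0) / (h * qc 0)"
  define y' where "y' = ((z' + g * q' / 2) * (h * qc 0) - A_qz g (qc 0) (zc 0) * (h * q'))
                         / ((h * qc 0) * (h * qc 0))"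
  have "DERIV (\<lambda>t. A_qz g (qc t) (zc t)) 0 :> z' + g * q' / 2"
    unfolding A_qz_def using DERIV_add[OF z DERIV_cdivide[OF DERIV_cmult[OF q, of g], of 2]] by simp
  from DERIV_divide[OF this DERIV_cmult[OF q, of h]]
  have "DERIV (\<lambda>t. A_qz g (qc t) (zc t) / (h * qc t)) 0 :> y'"
    using h q0 by (simp add: y'_def)
  from DERIV_chain2[OF DERIV_arctan this]
  have "DERIV (\<lambda>t. arctan (A_qz g (qc t) (zc t) / (h * qc t))) 0 :> inverse (1 + y\<^sup>2) * y'"
    by (simp add: y_def)
  from DERIV_chain2[OF DERIV_exp DERIV_cmult[OF this, of "fG g"]]
  have "DERIV (\<lambda>t. J2_qz g (qc t) (zc t)) 0 :> exp (fG g * arctan y) * (fG g * (inverse (1 + y\<^sup>2) * y'))"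
    unfolding J2_qz_def h_def[symmetric] by (simp add: y_def)
  moreover have "inverse (1 + y\<^sup>2) = (h * qc 0)\<^sup>2 / B_qz g (qc 0) (zc 0)"
    unfolding y_def using B h q0 by (simp add: field_simps power2_eq_square)
  then have "fG g * (inverse (1 + y\<^sup>2) * y') = g * (qc 0 * z' - zc 0 * q') / B_qz g (qc 0) (zc 0)"
    unfolding fG_def h_def[symmetric] y'_def
    proof (simp only:)
      show "g / h * ((h * qc 0)\<^sup>2 / B_qz g (qc 0) (zc 0) * (((z' + g * q' / 2) * (h * qc 0)
          - A_qz g (qc 0) (zc 0) * (h * q')) / (h * qc 0 * (h * qc 0))))
        = g * (qc 0 * z' - zc 0 * q') / B_qz g (qc 0) (zc 0)"
        using h q0 Bp by (simp add: A_qz_def field_simps power2_eq_square)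
    qed
  ultimately show ?thesis by (simp add: J2_qz_def y_def h_def)
qed

lemma B_J2_qz_deriv:
  assumes g: "-2 < g" "g < 2" and q: "DERIV qc 0 :> q'" and z: "DERIV zc 0 :> z'" and q0: "qc 0 > 0"
  shows "DERIV (\<lambda>t. B_qz g (qc t) (zc t) * J2_qz g (qc t) (zc t)) 0 :>
     2 * J2_qz g (qc 0) (zc 0) * (qc 0 * q' + (zc 0 + g * qc 0) * z')"
proof -
  have "B_qz g (qc 0) (zc 0) > 0" using B_qz_pos[OF g q0] .
  then have "(2 * zc 0 * z' + g * (q' * zc 0 + qc 0 * z') + 2 * qc 0 * q') * J2_qz g (qc 0) (zc 0)
     + J2_qz g (qc 0) (zc 0) * (g * (qc 0 * z' - zc 0 * q') / B_qz g (qc 0) (zc 0)) * B_qz g (qc 0) (zc 0)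
     = 2 * J2_qz g (qc 0) (zc 0) * (qc 0 * q' + (zc 0 + g * qc 0) * z')"
    by (simp add: field_simps)
  from DERIV_cong[OF DERIV_mult[OF B_qz_deriv[OF q z, where g=g] J2_qz_deriv[OF g q z q0]] this]
  show ?thesis .
qed

text \<open>By \<open>B_J2_qz_deriv\<close>, the hypothesis \<open>tangent\<close> below says that the curve \<open>(q, Z)\<close> is
  tangent to a level set of \<open>K\<^sup>2 = B J\<^sup>2\<close>.\<close>

lemma B_qz_deriv_tangent:
  assumes dq: "DERIV qc 0 :> q'" and dz: "DERIV zc 0 :> z'" and q0: "qc 0 > 0"
    and tangent: "qc 0 * q' + (zc 0 + g * qc 0) * z' = 0"
  shows "DERIV (\<lambda>t. B_qz g (qc t) (zc t)) 0 :> - g * z' * B_qz g (qc 0) (zc 0) / qc 0"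
proof -
  have q': "q' = - (zc 0 + g * qc 0) * z' / qc 0" using tangent q0 by (simp add: field_simps)
  have "2 * zc 0 * z' + g * (q' * zc 0 + qc 0 * z') + 2 * qc 0 * q'
      = - g * z' * B_qz g (qc 0) (zc 0) / qc 0"
    unfolding q' B_qz_def using q0 by (simp add: field_simps power2_eq_square)
  from DERIV_cong[OF B_qz_deriv[OF dq dz, where g=g] this] show ?thesis .
qed

lemma sqrt_B_qz_deriv_tangent:
  assumes g: "-2 < g" "g < 2" and dq: "DERIV qc 0 :> q'" and dz: "DERIV zc 0 :> z'" and q0: "qc 0 > 0"
    and tangent: "qc 0 * q' + (zc 0 + g * qc 0) * z' = 0"
  shows "DERIV (\<lambda>t. sqrt (B_qz g (qc t) (zc t))) 0 :> - g * z' * sqrt (B_qz g (qc 0) (zc 0)) / (2 * qc 0)"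
proof -
  define b where "b = B_qz g (qc 0) (zc 0)"
  have b: "b > 0" using B_qz_pos[OF g q0] by (simp add: b_def)
  then have "b = sqrt b * sqrt b" by simp
  then have "inverse (sqrt b) / 2 * (- g * z' * b / qc 0) = - g * z' * sqrt b / (2 * qc 0)"
    using b q0 by (simp add: field_simps)
  from DERIV_cong[OF DERIV_chain'[OF B_qz_deriv_tangent[OF dq dz q0 tangent]
      DERIV_real_sqrt[OF b[unfolded b_def]]] this[unfolded b_def]]
  show ?thesis .
qed

lemma inverse_sqrt_B_qz_deriv_tangent:
  assumes g: "-2 < g" "g < 2" and dq: "DERIV qc 0 :> q'" and dz: "DERIV zc 0 :> z'" and q0: "qc 0 > 0"
    and tangent: "qc 0 * q' + (zc 0 + g * qc 0) * z' = 0"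
  shows "DERIV (\<lambda>t. inverse (sqrt (B_qz g (qc t) (zc t)))) 0 :>
           g * z' / (2 * qc 0 * sqrt (B_qz g (qc 0) (zc 0)))"
proof -
  define S where "S = sqrt (B_qz g (qc 0) (zc 0))"
  have "S > 0" using B_qz_pos[OF g q0] by (simp add: S_def)
  then have "- (- g * z' * S / (2 * qc 0) * inverse (S ^ Suc (Suc 0))) = g * z' / (2 * qc 0 * S)"
    using q0 by (simp add: field_simps)
  from DERIV_cong[OF DERIV_inverse_fun[OF sqrt_B_qz_deriv_tangent[OF g dq dz q0 tangent]]
      this[unfolded S_def]] \<open>S > 0\<close>
  show ?thesis by (simp add: S_def)
qed

lemma A_qz_div_sqrt_B_qz_deriv_tangent:
  assumes g: "-2 < g" "g < 2" and dq: "DERIV qc 0 :> q'" and dz: "DERIV zc 0 :> z'" and q0: "qc 0 > 0"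
    and tangent: "qc 0 * q' + (zc 0 + g * qc 0) * z' = 0"
  shows "DERIV (\<lambda>t. A_qz g (qc t) (zc t) / (fh g * sqrt (B_qz g (qc t) (zc t)))) 0 :>
           fh g * z' / sqrt (B_qz g (qc 0) (zc 0))"
proof -
  define S where "S = sqrt (B_qz g (qc 0) (zc 0))"
  define h where "h = fh g"
  define A0 where "A0 = A_qz g (qc 0) (zc 0)"
  have S: "S > 0" using B_qz_pos[OF g q0] by (simp add: S_def)
  have h: "h > 0" "h\<^sup>2 = 1 - g\<^sup>2 / 4" using fh_pos[OF g] fh_square[OF g] by (simp_all add: h_def)
  have "DERIV (\<lambda>t. A_qz g (qc t) (zc t)) 0 :> z' + g * q' / 2"
    unfolding A_qz_def using DERIV_add[OF dz DERIV_cdivide[OF DERIV_cmult[OF dq, of g], of 2]] by simp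
  from DERIV_divide[OF this DERIV_cmult[OF sqrt_B_qz_deriv_tangent[OF g dq dz q0 tangent], of h]]
  have deriv: "DERIV (\<lambda>t. A_qz g (qc t) (zc t) / (h * sqrt (B_qz g (qc t) (zc t)))) 0 :>
      ((z' + g * q' / 2) * (h * S) - A0 * (h * (- g * z' * S / (2 * qc 0)))) / (h * S * (h * S))"
    using S h by (simp add: S_def A0_def)
  have key: "z' + g * q' / 2 + A0 * g * z' / (2 * qc 0) = h\<^sup>2 * z'"
  proof -
    have q': "q' = - (zc 0 + g * qc 0) * z' / qc 0" using tangent q0 by (simp add: field_simps)
    show ?thesis unfolding q' h(2) A0_def A_qz_def using q0 by (simp add: field_simps power2_eq_square)
  qed
  have "(z' + g * q' / 2) * (h * S) - A0 * (h * (- g * z' * S / (2 * qc 0)))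
      = h * S * (z' + g * q' / 2 + A0 * g * z' / (2 * qc 0))"
    using q0 by (simp add: field_simps)
  also have "\<dots> = h * S * (h\<^sup>2 * z')" by (simp only: key)
  finally have "((z' + g * q' / 2) * (h * S) - A0 * (h * (- g * z' * S / (2 * qc 0)))) / (h * S * (h * S))
      = h * z' / S"
    using S h(1) by (simp add: field_simps power2_eq_square)
  from DERIV_cong[OF deriv this] show ?thesis by (simp add: S_def h_def)
qed

lemma tangent_metric_identity:
  fixes q z S h g E P vn wn :: real
  assumes q: "q > 0" and S: "S > 0" "S\<^sup>2 = B_qz g q z" and h: "h\<^sup>2 = 1 - g\<^sup>2/4" and E: "E * B_qz g q z = 1"
  shows "E * (P + wn * vn + g * (- (z + g * q) * wn) / q * vn) =
    (1/S) * (1/S) * P + (1/S) * (g * wn / (2 * q * S)) * (- (z + g * q) * vn)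
    + (g * vn / (2 * q * S)) * (1/S) * (- (z + g * q) * wn)
    + (g * vn / (2 * q * S)) * (g * wn / (2 * q * S)) * q\<^sup>2 + (h * vn / S) * (h * wn / S)"
proof -
  have "B_qz g q z > 0" using S by (metis zero_less_power2 less_irrefl)
  then have E': "E = 1 / (S * S)" using E S(2) by (simp add: field_simps power2_eq_square)
  have "(h * vn / S) * (h * wn / S) = (h * h) * (vn * wn) / (S * S)"
    by (simp add: field_simps)
  also have "\<dots> = (1 - g\<^sup>2/4) * (vn * wn) / (S * S)" using h by (simp add: power2_eq_square)
  finally have hv: "(h * vn / S) * (h * wn / S) = (1 - g\<^sup>2/4) * (vn * wn) / (S * S)" .
  show ?thesis unfolding E' hv using q S(1)
    by (simp add: field_simps power2_eq_square)
qed

section \<open>The indicatrix is locally isometric to a sphere\<close>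

definition rinner :: "real^'m^'m \<Rightarrow> (real^'m) \<times> real \<Rightarrow> (real^'m) \<times> real \<Rightarrow> real" where
  "rinner r a b = fst a \<bullet> (r *v fst b) + snd a * snd b"

definition sigma :: "real \<Rightarrow> real^'m^'m \<Rightarrow> (real^'m) \<times> real \<Rightarrow> (real^'m) \<times> real" where
  "sigma g r R = ((1 / sqrt (fB g r R)) *\<^sub>R fst R, fA g r R / (fh g * sqrt (fB g r R)))"

text \<open>The differential of \<open>sigma\<close> at \<open>R\<close>, valid only on vectors \<open>v\<close> tangent to the level
  set of \<open>K\<close> through \<open>R\<close>, i.e. with \<open>R' \<bullet> (r v') + (Z + g q) v\<^sub>N = 0\<close>.\<close>

definition dsigma :: "real \<Rightarrow> real^'m^'m \<Rightarrow> (real^'m) \<times> real \<Rightarrow> (real^'m) \<times> real \<Rightarrow> (real^'m) \<times> real" where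
  "dsigma g r R v =
     ((1 / sqrt (fB g r R)) *\<^sub>R fst v + (g * snd v / (2 * fq r R * sqrt (fB g r R))) *\<^sub>R fst R,
      fh g * snd v / sqrt (fB g r R))"

locale finsleroid =
  fixes g :: real and r :: "real^'m^'m"
  assumes g_gt: "-2 < g" and g_lt: "g < 2" and r_symmetric: "transpose r = r"
    and r_pos: "\<And>x. x \<noteq> 0 \<Longrightarrow> x \<bullet> (r *v x) > 0"
begin

lemma r_commute: "x \<bullet> (r *v y) = y \<bullet> (r *v x)"
proof -
  have "x \<bullet> (r *v y) = (x v* r) \<bullet> y" by (simp add: dot_lmul_matrix)
  also have "x v* r = r *v x" using vector_transpose_matrix[of x r] r_symmetric by simp
  finally show ?thesis by (simp add: inner_commute)
qed

lemma r_nonneg: "x \<bullet> (r *v x) \<ge> 0"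
  using r_pos[of x] by (cases "x = 0") auto

lemma fq_square: "(fq r R)\<^sup>2 = fst R \<bullet> (r *v fst R)"
  unfolding fq_def using r_nonneg by simp

lemma fB_eq: "fB g r R = B_qz g (fq r R) (snd R)"
  by (simp add: fB_def B_qz_def)

lemma fA_eq: "fA g r R = A_qz g (fq r R) (snd R)"
  by (simp add: fA_def A_qz_def)

lemma fB_pos: "fq r R > 0 \<Longrightarrow> fB g r R > 0"
  unfolding fB_eq by (rule B_qz_pos[OF g_gt g_lt])

lemma fK_square:
  assumes "fq r R > 0"
  shows "(fK g r R)\<^sup>2 = B_qz g (fq r R) (snd R) * J2_qz g (fq r R) (snd R)"
proof -
  have "(sqrt (fB g r R))\<^sup>2 = fB g r R" using fB_pos[OF assms] by simp
  moreover have "(fJ g r R)\<^sup>2 = J2_qz g (fq r R) (snd R)"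
    using assms by (simp add: fJ_def fPhi_def J2_qz_def fA_eq power2_eq_square exp_add[symmetric])
  ultimately show ?thesis by (simp add: fK_def power_mult_distrib fB_eq)
qed

lemma bounded_bilinear_r: "bounded_bilinear (\<lambda>a b::(real^'m) \<times> real. fst a \<bullet> (r *v fst b))"
  using bounded_bilinear.comp[OF bounded_bilinear_inner bounded_linear_fst
      bounded_linear_compose[OF matrix_vector_mul_bounded_linear bounded_linear_fst]] .

lemma fq_deriv:
  fixes \<gamma> :: "real \<Rightarrow> (real^'m) \<times> real"
  assumes d: "(\<gamma> has_vector_derivative v) (at 0)" and q0: "fq r (\<gamma> 0) > 0"
  shows "DERIV (\<lambda>t. fq r (\<gamma> t)) 0 :> (fst (\<gamma> 0) \<bullet> (r *v fst v)) / fq r (\<gamma> 0)"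
proof -
  define Q where "Q t = fst (\<gamma> t) \<bullet> (r *v fst (\<gamma> t))" for t
  have Q0: "Q 0 > 0" using q0 by (simp add: fq_def Q_def)
  have "((\<lambda>t. fst (\<gamma> t) \<bullet> (r *v fst (\<gamma> t))) has_vector_derivative
      fst (\<gamma> 0) \<bullet> (r *v fst v) + fst v \<bullet> (r *v fst (\<gamma> 0))) (at 0)"
    using bounded_bilinear.has_vector_derivative[OF bounded_bilinear_r d d] by simp
  then have "DERIV Q 0 :> 2 * (fst (\<gamma> 0) \<bullet> (r *v fst v))"
    unfolding Q_def using r_commute[of "fst v" "fst (\<gamma> 0)"]
    by (simp add: has_real_derivative_iff_has_vector_derivative)
  from DERIV_chain'[OF this DERIV_real_sqrt[OF Q0]] Q0
  show ?thesis by (simp add: fq_def Q_def field_simps)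
qed

lemma fK_square_deriv:
  fixes \<gamma> :: "real \<Rightarrow> (real^'m) \<times> real"
  assumes d: "(\<gamma> has_vector_derivative v) (at 0)" and q0: "fq r (\<gamma> 0) > 0"
  shows "DERIV (\<lambda>t. (fK g r (\<gamma> t))\<^sup>2) 0 :>
     2 * J2_qz g (fq r (\<gamma> 0)) (snd (\<gamma> 0))
       * (fst (\<gamma> 0) \<bullet> (r *v fst v) + (snd (\<gamma> 0) + g * fq r (\<gamma> 0)) * snd v)"
proof -
  note dq = fq_deriv[OF d q0]
  have dz: "DERIV (\<lambda>t. snd (\<gamma> t)) 0 :> snd v"
    using bounded_linear.has_vector_derivative[OF bounded_linear_snd d]
    by (simp add: has_real_derivative_iff_has_vector_derivative)
  have "\<forall>\<^sub>F t in nhds 0. fq r (\<gamma> t) > 0"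
    using isCont_eventually_pos[OF DERIV_isCont[OF dq] q0] .
  then have "\<forall>\<^sub>F t in nhds 0. (fK g r (\<gamma> t))\<^sup>2
      = B_qz g (fq r (\<gamma> t)) (snd (\<gamma> t)) * J2_qz g (fq r (\<gamma> t)) (snd (\<gamma> t))"
    by eventually_elim (rule fK_square)
  from DERIV_cong_ev[OF refl this refl] B_J2_qz_deriv[OF g_gt g_lt dq dz q0] q0
  show ?thesis by simp
qed

lemma sigma_has_vector_derivative:
  fixes \<gamma> :: "real \<Rightarrow> (real^'m) \<times> real"
  assumes d: "(\<gamma> has_vector_derivative v) (at 0)" and q0: "fq r (\<gamma> 0) > 0"
    and tangent: "fst (\<gamma> 0) \<bullet> (r *v fst v) + (snd (\<gamma> 0) + g * fq r (\<gamma> 0)) * snd v = 0"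
  shows "((\<lambda>t. sigma g r (\<gamma> t)) has_vector_derivative dsigma g r (\<gamma> 0) v) (at 0)"
proof -
  define q where "q t = fq r (\<gamma> t)" for t
  define z where "z t = snd (\<gamma> t)" for t
  have dq: "DERIV q 0 :> (fst (\<gamma> 0) \<bullet> (r *v fst v)) / q 0"
    unfolding q_def by (rule fq_deriv[OF d q0])
  have dz: "DERIV z 0 :> snd v"
    unfolding z_def using bounded_linear.has_vector_derivative[OF bounded_linear_snd d]
    by (simp add: has_real_derivative_iff_has_vector_derivative)
  have q0': "q 0 > 0" using q0 by (simp add: q_def)
  have tangent': "q 0 * ((fst (\<gamma> 0) \<bullet> (r *v fst v)) / q 0) + (z 0 + g * q 0) * snd v = 0"
    using tangent q0' by (simp add: q_def z_def)
  note deriv_fst = bounded_linear.has_vector_derivative[OF bounded_linear_fst d]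
  have "((\<lambda>t. (inverse (sqrt (B_qz g (q t) (z t))) *\<^sub>R fst (\<gamma> t),
              A_qz g (q t) (z t) / (fh g * sqrt (B_qz g (q t) (z t))))) has_vector_derivative
      (inverse (sqrt (B_qz g (q 0) (z 0))) *\<^sub>R fst v
         + (g * snd v / (2 * q 0 * sqrt (B_qz g (q 0) (z 0)))) *\<^sub>R fst (\<gamma> 0),
       fh g * snd v / sqrt (B_qz g (q 0) (z 0)))) (at 0)"
    using has_vector_derivative_scaleR[OF
        inverse_sqrt_B_qz_deriv_tangent[OF g_gt g_lt dq dz q0' tangent'] deriv_fst]
      A_qz_div_sqrt_B_qz_deriv_tangent[OF g_gt g_lt dq dz q0' tangent']
    by (intro has_vector_derivative_Pair)
      (simp_all add: has_real_derivative_iff_has_vector_derivative)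
  then show ?thesis
    by (simp add: sigma_def dsigma_def q_def z_def fB_eq fA_eq inverse_eq_divide)
qed

lemma eventually_deriv_fK_square_line:
  assumes q0: "fq r R > 0"
  shows "\<forall>\<^sub>F s in nhds 0. deriv (\<lambda>t. (fK g r (R + t *\<^sub>R v + s *\<^sub>R w))\<^sup>2) 0
     = 2 * J2_qz g (fq r (R + s *\<^sub>R w)) (snd R + s * snd w)
         * (fst R \<bullet> (r *v fst v) + s * (fst w \<bullet> (r *v fst v))
            + (snd R + s * snd w + g * fq r (R + s *\<^sub>R w)) * snd v)"
proof -
  have "isCont (\<lambda>s. fq r (R + s *\<^sub>R w)) 0"
    using fq_deriv[OF has_vector_derivative_line[of R w 0]] q0 by (auto intro: DERIV_isCont)
  from isCont_eventually_pos[OF this] q0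
  have "\<forall>\<^sub>F s in nhds 0. fq r (R + s *\<^sub>R w) > 0" by simp
  then show ?thesis
  proof eventually_elim
    case (elim s)
    have "DERIV (\<lambda>t. (fK g r (R + t *\<^sub>R v + s *\<^sub>R w))\<^sup>2) 0 :>
        2 * J2_qz g (fq r (R + 0 *\<^sub>R v + s *\<^sub>R w)) (snd (R + 0 *\<^sub>R v + s *\<^sub>R w))
          * (fst (R + 0 *\<^sub>R v + s *\<^sub>R w) \<bullet> (r *v fst v)
             + (snd (R + 0 *\<^sub>R v + s *\<^sub>R w) + g * fq r (R + 0 *\<^sub>R v + s *\<^sub>R w)) * snd v)"
      using elim fK_square_deriv[OF has_vector_derivative_line[of "R + s *\<^sub>R w" v 0]]
      by (simp add: algebra_simps)
    then show ?case by (simp add: DERIV_imp_deriv inner_add_left algebra_simps)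
  qed
qed

lemma finsler_g_tangent:
  assumes q0: "fq r R > 0" and tangent: "fst R \<bullet> (r *v fst v) + (snd R + g * fq r R) * snd v = 0"
  shows "finsler_g g r R v w = J2_qz g (fq r R) (snd R) *
     (fst w \<bullet> (r *v fst v) + snd w * snd v + g * (fst R \<bullet> (r *v fst w)) / fq r R * snd v)"
proof -
  define q where "q s = fq r (R + s *\<^sub>R w)" for s
  define z where "z s = snd R + s * snd w" for s
  define M where "M s = fst R \<bullet> (r *v fst v) + s * (fst w \<bullet> (r *v fst v)) + (z s + g * q s) * snd v" for s
  define xw where "xw = fst R \<bullet> (r *v fst w)"
  have q0': "q 0 > 0" using q0 by (simp add: q_def)
  have dq: "DERIV q 0 :> xw / q 0"
    unfolding q_def xw_def using fq_deriv[OF has_vector_derivative_line[of R w 0]] q0 by simp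
  have dz: "DERIV z 0 :> snd w"
    unfolding z_def by (auto intro!: derivative_eq_intros)
  have dM: "DERIV M 0 :> fst w \<bullet> (r *v fst v) + (snd w + g * (xw / q 0)) * snd v"
    unfolding M_def using dz dq by (auto intro!: derivative_eq_intros)
  have M0: "M 0 = 0" using tangent by (simp add: M_def z_def q_def)
  have "DERIV (\<lambda>s. 2 * J2_qz g (q s) (z s) * M s) 0 :>
      2 * J2_qz g (q 0) (z 0) * (fst w \<bullet> (r *v fst v) + (snd w + g * (xw / q 0)) * snd v)"
    using DERIV_mult[OF DERIV_cmult[OF J2_qz_deriv[OF g_gt g_lt dq dz q0'], of 2] dM] M0 by (simp add: mult.commute)
  then have "DERIV (\<lambda>s. deriv (\<lambda>t. (fK g r (R + t *\<^sub>R v + s *\<^sub>R w))\<^sup>2) 0) 0 :>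
      2 * J2_qz g (q 0) (z 0) * (fst w \<bullet> (r *v fst v) + (snd w + g * (xw / q 0)) * snd v)"
    using DERIV_cong_ev[OF refl eventually_deriv_fK_square_line[OF q0, of v w] refl]
    by (simp add: M_def q_def z_def)
  then show ?thesis
    by (simp add: finsler_g_def DERIV_imp_deriv q_def z_def xw_def algebra_simps)
qed

lemma rinner_commute: "rinner r a b = rinner r b a"
  by (simp add: rinner_def r_commute)

lemma bounded_bilinear_rinner: "bounded_bilinear (rinner r)"
proof -
  have "bilinear (rinner r)"
    unfolding bilinear_def
    by (auto intro!: linearI simp: rinner_def algebra_simps inner_add_left inner_add_right)
  then show ?thesis by (simp add: bilinear_conv_bounded_bilinear)
qed

lemma rinner_pos: "a \<noteq> 0 \<Longrightarrow> rinner r a a > 0"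
proof (cases "fst a = 0")
  case True
  moreover assume "a \<noteq> 0"
  ultimately have "snd a \<noteq> 0" by (simp add: prod_eq_iff)
  then have "snd a * snd a > 0" by (metis not_real_square_gt_zero)
  with True show ?thesis by (simp add: rinner_def)
next
  case False
  then show ?thesis
    unfolding rinner_def using r_pos by (intro add_pos_nonneg) simp_all
qed

lemma rinner_sigma:
  assumes q0: "fq r R > 0"
  shows "rinner r (sigma g r R) (sigma g r R) = 1 / (fh g)\<^sup>2"
proof -
  define q where "q = fq r R"
  define S where "S = sqrt (fB g r R)"
  define h where "h = fh g"
  define A where "A = A_qz g q (snd R)"
  have S: "S > 0" "S * S = A\<^sup>2 + (h * q)\<^sup>2"
    using fB_pos[OF q0] B_qz_eq_sum_squares[OF g_gt g_lt]
    by (simp_all add: S_def fB_eq q_def h_def A_def)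
  have h: "h > 0" using fh_pos[OF g_gt g_lt] by (simp add: h_def)
  have "rinner r (sigma g r R) (sigma g r R) = (1/S) * (1/S) * q\<^sup>2 + (A / (h * S)) * (A / (h * S))"
    by (simp add: rinner_def sigma_def S_def q_def h_def A_def fq_square fA_eq matrix_vector_mult_scaleR)
  also have "\<dots> = (A\<^sup>2 + (h * q)\<^sup>2) / (h\<^sup>2 * (S * S))"
    using S(1) h by (simp add: field_simps power2_eq_square)
  also have "\<dots> = (S * S) / (h\<^sup>2 * (S * S))" by (simp only: S(2))
  also have "\<dots> = 1 / h\<^sup>2" using S(1) h by simp
  finally show ?thesis by (simp add: h_def)
qed

lemma finsler_g_eq_rinner_dsigma:
  assumes q0: "fq r R > 0" and K1: "fK g r R = 1"
    and tv: "fst R \<bullet> (r *v fst v) + (snd R + g * fq r R) * snd v = 0"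
    and tw: "fst R \<bullet> (r *v fst w) + (snd R + g * fq r R) * snd w = 0"
  shows "finsler_g g r R v w = rinner r (dsigma g r R v) (dsigma g r R w)"
proof -
  define q where "q = fq r R"
  define z where "z = snd R"
  define S where "S = sqrt (fB g r R)"
  define h where "h = fh g"
  have S: "S > 0" "S\<^sup>2 = B_qz g q z" using fB_pos[OF q0] by (simp_all add: S_def fB_eq q_def z_def)
  have h: "h\<^sup>2 = 1 - g\<^sup>2/4" by (simp add: h_def fh_square[OF g_gt g_lt])
  have J2: "J2_qz g q z * B_qz g q z = 1"
    using fK_square[OF q0] K1 by (simp add: q_def z_def mult.commute)
  have Rv: "fst v \<bullet> (r *v fst R) = - (z + g * q) * snd v"
    using tv r_commute[of "fst v" "fst R"] by (simp add: q_def z_def algebra_simps)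
  have Rw: "fst R \<bullet> (r *v fst w) = - (z + g * q) * snd w"
    using tw by (simp add: q_def z_def algebra_simps)
  have "finsler_g g r R v w
      = J2_qz g q z * (fst w \<bullet> (r *v fst v) + snd w * snd v + g * (- (z + g * q) * snd w) / q * snd v)"
    using finsler_g_tangent[OF q0 tv, of w] Rw by (simp add: q_def z_def)
  also have "\<dots> = (1/S) * (1/S) * (fst w \<bullet> (r *v fst v))
    + (1/S) * (g * snd w / (2 * q * S)) * (- (z + g * q) * snd v)
    + (g * snd v / (2 * q * S)) * (1/S) * (- (z + g * q) * snd w)
    + (g * snd v / (2 * q * S)) * (g * snd w / (2 * q * S)) * q\<^sup>2 + (h * snd v / S) * (h * snd w / S)"
    by (rule tangent_metric_identity[OF q0[folded q_def] S h J2])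
  also have "\<dots> = rinner r (dsigma g r R v) (dsigma g r R w)"
    unfolding rinner_def dsigma_def S_def[symmetric] q_def[symmetric] h_def[symmetric]
    apply (simp add: inner_add_left inner_add_right matrix_vector_right_distrib matrix_vector_mult_scaleR
        r_commute[of "fst v" "fst w"] Rv Rw fq_square[of R, folded q_def])
    using S(1) q0 by (simp add: q_def field_simps power2_eq_square)
  finally show ?thesis .
qed

lemma linear_dsigma: "linear (dsigma g r R)"
  by (rule linearI) (simp_all add: dsigma_def algebra_simps add_divide_distrib)

lemma dsigma_eq_0_imp:
  assumes q0: "fq r R > 0" and "dsigma g r R v = 0"
  shows "v = 0"
proof -
  have "snd v = 0" using assms(2) fB_pos[OF q0] fh_pos[OF g_gt g_lt] by (simp add: dsigma_def prod_eq_iff)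
  moreover have "fst v = 0" using assms(2) fB_pos[OF q0] calculation by (simp add: dsigma_def prod_eq_iff)
  ultimately show ?thesis by (simp add: prod_eq_iff)
qed

end

context finsleroid
begin

lemma chart_tangent:
  assumes U: "open U" and \<phi>: "Ck (Suc 0) \<phi> U" and u: "u \<in> U"
    and indicatrix: "\<And>u. u \<in> U \<Longrightarrow> fK g r (\<phi> u) = 1"
    and off_axis: "\<And>u. u \<in> U \<Longrightarrow> fq r (\<phi> u) > 0"
  shows "fst (\<phi> u) \<bullet> (r *v fst (pd \<phi> i u)) + (snd (\<phi> u) + g * fq r (\<phi> u)) * snd (pd \<phi> i u) = 0"
proof -
  have "DERIV (\<lambda>t. (fK g r (\<phi> (u + t *\<^sub>R axis i 1)))\<^sup>2) 0 :>
     2 * J2_qz g (fq r (\<phi> u)) (snd (\<phi> u))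
       * (fst (\<phi> u) \<bullet> (r *v fst (pd \<phi> i u)) + (snd (\<phi> u) + g * fq r (\<phi> u)) * snd (pd \<phi> i u))"
    using fK_square_deriv[OF Ck_has_pd[OF \<phi> u]] off_axis[OF u] by simp
  moreover have "\<forall>\<^sub>F t in nhds 0. (fK g r (\<phi> (u + t *\<^sub>R axis i 1)))\<^sup>2 = 1"
    using eventually_line_in_open[OF U u, of "axis i 1"] by eventually_elim (simp add: indicatrix)
  from DERIV_cong_ev[OF refl this refl, of 0]
  have "DERIV (\<lambda>t. (fK g r (\<phi> (u + t *\<^sub>R axis i 1)))\<^sup>2) 0 :> 0" by simp
  ultimately show ?thesis
    using DERIV_unique by (fastforce simp: J2_qz_def)
qed

lemma pd_sigma_chart:
  assumes U: "open U" and \<phi>: "Ck (Suc 0) \<phi> U" and u: "u \<in> U"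
    and indicatrix: "\<And>u. u \<in> U \<Longrightarrow> fK g r (\<phi> u) = 1"
    and off_axis: "\<And>u. u \<in> U \<Longrightarrow> fq r (\<phi> u) > 0"
  shows "pd (\<lambda>v. sigma g r (\<phi> v)) i u = dsigma g r (\<phi> u) (pd \<phi> i u)"
  using sigma_has_vector_derivative[OF Ck_has_pd[OF \<phi> u]] off_axis[OF u]
    chart_tangent[OF assms]
  by (intro pd_eqI) simp

lemma Ck_sigma_chart:
  assumes U: "open U" and \<phi>: "Ck k \<phi> U"
    and off_axis: "\<And>u. u \<in> U \<Longrightarrow> fq r (\<phi> u) > 0"
  shows "Ck k (\<lambda>u. sigma g r (\<phi> u)) U"
proof -
  define q where "q u = sqrt (fst (\<phi> u) \<bullet> (r *v fst (\<phi> u)))" for u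
  define Z where "Z u = snd (\<phi> u)" for u
  define B where "B u = Z u * Z u + g * q u * Z u + q u * q u" for u
  define A where "A u = Z u + g * q u / 2" for u
  have q_pos: "q u > 0" if "u \<in> U" for u using off_axis[OF that] by (simp add: q_def fq_def)
  have B_pos: "B u > 0" if "u \<in> U" for u
    using fB_pos[OF off_axis[OF that]] by (simp add: B_def fB_def q_def Z_def fq_def power2_eq_square)
  have fst: "Ck k (\<lambda>u. fst (\<phi> u)) U" by (rule Ck_linear[OF U bounded_linear_fst \<phi>])
  have "Ck k (\<lambda>u. r *v fst (\<phi> u)) U"
    by (rule Ck_linear[OF U bounded_linear_compose[OF matrix_vector_mul_bounded_linear bounded_linear_fst] \<phi>])
  with fst have "Ck k (\<lambda>u. fst (\<phi> u) \<bullet> (r *v fst (\<phi> u))) U" by (rule Ck_inner[OF U])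
  then have q: "Ck k q U"
    unfolding q_def using q_pos by (intro Ck_sqrt[OF U]) (simp add: q_def)
  have Z: "Ck k Z U" unfolding Z_def by (rule Ck_linear[OF U bounded_linear_snd \<phi>])
  have "Ck k B U"
    unfolding B_def by (intro Ck_add[OF U] Ck_mult[OF U] Z q Ck_const)
  then have sqrt_B: "Ck k (\<lambda>u. sqrt (B u)) U" using B_pos by (intro Ck_sqrt[OF U]) auto
  have "Ck k (\<lambda>u. inverse (sqrt (B u))) U"
    by (rule Ck_inverse[OF U _ sqrt_B]) (use B_pos in force)
  moreover have "Ck k (\<lambda>u. inverse (fh g * sqrt (B u))) U"
    by (rule Ck_inverse[OF U _ Ck_mult[OF U Ck_const sqrt_B]]) (use B_pos fh_pos[OF g_gt g_lt] in force)
  moreover have "Ck k A U"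
    unfolding A_def by (intro Ck_add[OF U] Z Ck_linear[OF U bounded_linear_divide] Ck_mult[OF U] Ck_const q)
  ultimately have "Ck k (\<lambda>u. (inverse (sqrt (B u)) *\<^sub>R fst (\<phi> u), A u * inverse (fh g * sqrt (B u)))) U"
    using fst by (intro Ck_Pair[OF U] Ck_scaleR[OF U] Ck_mult[OF U])
  moreover have "sigma g r (\<phi> u) = (inverse (sqrt (B u)) *\<^sub>R fst (\<phi> u), A u * inverse (fh g * sqrt (B u)))"
    for u
    by (simp add: sigma_def B_def A_def fB_def fA_def q_def Z_def fq_def power2_eq_square inverse_eq_divide)
  ultimately show ?thesis by simp
qed

lemma sphere_hypersurface_sigma_chart:
  assumes U: "open U" and smooth: "smooth_on \<phi> U"
    and immersion: "\<And>u c. u \<in> U \<Longrightarrow> (\<Sum>i\<in>UNIV. c i *\<^sub>R pd \<phi> i u) = 0 \<Longrightarrow> (\<forall>i. c i = 0)"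
    and indicatrix: "\<And>u. u \<in> U \<Longrightarrow> fK g r (\<phi> u) = 1"
    and off_axis: "\<And>u. u \<in> U \<Longrightarrow> fq r (\<phi> u) > 0"
  shows "sphere_hypersurface (rinner r) U (\<lambda>u. sigma g r (\<phi> u)) (1 / (fh g)\<^sup>2) (ind_metric g r \<phi>)"
proof -
  have \<phi>: "Ck k \<phi> U" for k using smooth by (simp add: smooth_on_def)
  note pd_sigma = pd_sigma_chart[OF U \<phi> _ indicatrix off_axis]
  note tangent = chart_tangent[OF U \<phi> _ indicatrix off_axis]
  show ?thesis
  proof (rule sphere_hypersurface.intro[OF bounded_bilinear_rinner sphere_hypersurface_axioms.intro])
    show "open U" by (rule U)
    show "rinner r x y = rinner r y x" for x y by (rule rinner_commute)
    show "x \<noteq> 0 \<Longrightarrow> rinner r x x > 0" for x by (rule rinner_pos)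
    show "Ck 3 (\<lambda>u. sigma g r (\<phi> u)) U" by (rule Ck_sigma_chart[OF U \<phi> off_axis])
    show "1 / (fh g)\<^sup>2 > 0" using fh_pos[OF g_gt g_lt] by simp
    show "rinner r (sigma g r (\<phi> u)) (sigma g r (\<phi> u)) = 1 / (fh g)\<^sup>2" if "u \<in> U" for u
      by (rule rinner_sigma[OF off_axis[OF that]])
    show "\<forall>i. a i = 0"
      if u: "u \<in> U" and a: "(\<Sum>i\<in>UNIV. a i *\<^sub>R pd (\<lambda>u. sigma g r (\<phi> u)) i u) = 0" for u a
    proof -
      have "dsigma g r (\<phi> u) (\<Sum>i\<in>UNIV. a i *\<^sub>R pd \<phi> i u) = 0"
        using a by (simp add: linear_sum[OF linear_dsigma] linear_cmul[OF linear_dsigma] pd_sigma[OF u])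
      then show ?thesis by (rule immersion[OF u dsigma_eq_0_imp[OF off_axis[OF u]]])
    qed
    show "ind_metric g r \<phi> u = (\<chi> i j. rinner r (pd (\<lambda>u. sigma g r (\<phi> u)) i u) (pd (\<lambda>u. sigma g r (\<phi> u)) j u))"
      if u: "u \<in> U" for u
      unfolding ind_metric_def vec_eq_iff
      by (simp add: pd_sigma[OF u] finsler_g_eq_rinner_dsigma[OF off_axis[OF u] indicatrix[OF u] tangent[OF u] tangent[OF u]])
  qed
qed

end

theorem theorem2p4:
  fixes g :: real and r :: "real^'m^'m"
    and \<phi> :: "real^'m \<Rightarrow> (real^'m) \<times> real" and U :: "(real^'m) set"
  assumes g_range: "-2 < g" "g < 2"
    and r_sym: "transpose r = r"
    and r_pos: "\<And>x. x \<noteq> 0 \<Longrightarrow> x \<bullet> (r *v x) > 0"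
    and U_open: "open U"
    and \<phi>_smooth: "smooth_on \<phi> U"
    and \<phi>_immersion: "\<And>u c. u \<in> U \<Longrightarrow> (\<Sum>i\<in>UNIV. c i *\<^sub>R pd \<phi> i u) = 0 \<Longrightarrow> (\<forall>i. c i = 0)"
    and \<phi>_indicatrix: "\<And>u. u \<in> U \<Longrightarrow> fK g r (\<phi> u) = 1"
    and \<phi>_off_axis: "\<And>u. u \<in> U \<Longrightarrow> fq r (\<phi> u) > 0"
  shows "(\<forall>u\<in>U. \<forall>i j k l.
            riem g r \<phi> i j k l u =
              (- quad_disc 1 g 1 / 4) *
                (ind_metric g r \<phi> u $ i $ k * ind_metric g r \<phi> u $ j $ l
                 - ind_metric g r \<phi> u $ i $ l * ind_metric g r \<phi> u $ j $ k))
         \<and> - quad_disc 1 g 1 / 4 = 1 - g^2 / 4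
         \<and> 1 - g^2 / 4 = (fh g)^2"
proof -
  interpret F: finsleroid g r
    using g_range r_sym r_pos by unfold_locales auto
  interpret S: sphere_hypersurface "rinner r" U "\<lambda>u. sigma g r (\<phi> u)" "1 / (fh g)\<^sup>2" "ind_metric g r \<phi>"
    by (rule F.sphere_hypersurface_sigma_chart[OF U_open \<phi>_smooth \<phi>_immersion \<phi>_indicatrix \<phi>_off_axis])
  have "- quad_disc 1 g 1 / 4 = 1 - g^2 / 4" by (simp add: quad_disc_def)
  moreover have "1 - g^2 / 4 = (fh g)^2" using fh_square[OF g_range] by simp
  ultimately show ?thesis
    unfolding riem_eq_riemann_ind_metric using S.riemann_eq by simp
qed

end
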